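(* Let $\Gamma$ be a gain operator on $\ell^\infty_+(\mathcal I)$ and assume: (i) there is a subset $A\subset\Psi(\Gamma)$ which is weakly$^*$ closed, forward-invariant ($\Gamma(A)\subset A$), cofinal and coercive; (ii) $\Sigma(\Gamma)$ is GATT; (iii) Assumption A holds and $\mathcal N^+_i(1)\setminus\{i\}\ne\emptyset$ for all $i\in\mathcal I$. Then there exists $s^0\in\mathrm{int}(\ell^\infty_+(\mathcal I))\cap\Psi(\Gamma)$ admitting a complete orbit $\{s^n:n\in\mathbb Z\}$ (i.e. $s^{n+1}=\Gamma(s^n)$ for all $n\in\mathbb Z$) such that the path obtained by linear interpolation between the points $s^n$ is a $C^0$-path of decay for $\Gamma$.
   Context: Let $\mathcal I$ be a nonempty countable index set; $\ell^\infty_+(\mathcal I)$ is the cone of nonnegative real families $s=(s_i)_{i\in\mathcal I}$ with $\|s\|:=\sup_i|s_i|<\infty$, ordered componentwise; its interior is $\mathrm{int}(\ell^\infty_+(\mathcal I))=\{s:\inf_i s_i>0\}$; $\mathbf 1$ is the all-ones vector. The weak$^*$-topology is that of $\ell^\infty(\mathcal I)=(\ell^1(\mathcal I))^*$. $\mathcal K_\infty$: continuous strictly increasing unbounded $\gamma:\mathbb R_+\to\mathbb R_+$ with $\gamma(0)=0$. For $\mathcal J\subset\mathcal I$, $s_{|\mathcal J}$ agrees with $s$ on $\mathcal J$ and is $0$ elsewhere. Gain operator: for each $i$ a finite (possibly empty) $\mathcal I_i\subset\mathcal I\setminus\{i\}$; directed graph $\mathcal G$ with vertices $\mathcal I$ and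 edges $ji$, $j\in\mathcal I_i$; a pointwise equicontinuous family $\gamma_{ij}\in\mathcal K_\infty$ ($ji\in E(\mathcal G)$); functions $\mu_i:\ell^\infty_+(\mathcal I)\to[0,\infty]$ with (M1) some $\xi\in\mathcal K_\infty$ has $\mu_i(0)=0$, $\mu_i(s)\ge\xi(\|s\|)$; (M2) $\mu_i$ monotone; (M3) for each finite $\mathcal J$, $\mu_i$ restricted to vectors vanishing off $\mathcal J$ is finite-valued and continuous; (M4) for each norm-bounded $A$ and $\varepsilon>0$ there is $\delta>0$ with $\sup_i|\mu_i(s_{|\mathcal I_i})-\mu_i(s^0_{|\mathcal I_i})|\le\varepsilon$ whenever $s^0\in A$, $\|s-s^0\|\le\delta$. $\Gamma_i(s):=\mu_i([\gamma_{ij}(s_j)]_{j\in\mathcal I_i})$ (argument zero outside $\mathcal I_i$). Assumption A: there is $\eta\in\mathcal K_\infty$ with $\gamma_{ij}\ge\eta$ for all $ji\in E(\mathcal G)$, and $\mathcal I_i\ne\emptyset$ for all $i$. $\mathcal N^+_i(1)$ is the set of vertices $j$ reachable from $i$ by a directed path of length at most $1$ (i.e. $\{i\}\cup\{j: i\in\mathcal I_j\}$). $\Psi(\Gamma):=\{s:\Gamma(s)\le s\}$; $\Sigma(\Gamma)$ is the system $s^{n+1}=\Gamma(s^n)$, GATT if $\|\Gamma^n(s)\|\to0$ for all $s$. $A$ is cofinal if every $s$ has $\hat s\in A$ with $s\le\hat s$; coercive if $s\ge\underline\varphi(\|s\|)\mathbf 1$ for all $s\in A$ and some $\underline\varphi\in\mathcal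 K_\infty$. A $C^0$-path of decay for $\Gamma$ is a path $\sigma:\mathbb R_+\to\ell^\infty_+(\mathcal I)$ with $\sigma(r)\in\Psi(\Gamma)$ for all $r$, $\varphi_{\min}(r)\mathbf 1\le\sigma(r)\le\varphi_{\max}(r)\mathbf 1$ for some $\varphi_{\min},\varphi_{\max}\in\mathcal K_\infty$, increasing and norm-continuous. *)

theory Defs
  imports "HOL-Analysis.Analysis"
begin

definition linf :: "('i \<Rightarrow> real) set" where
  "linf = {s. bdd_above (range (\<lambda>i. \<bar>s i\<bar>))}"

definition linf_plus :: "('i \<Rightarrow> real) set" where
  "linf_plus = {s. (\<forall>i. 0 \<le> s i) \<and> bdd_above (range s)}"

definition supnorm :: "('i \<Rightarrow> real) \<Rightarrow> real" where
  "supnorm s = (SUP i. \<bar>s i\<bar>)"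

definition restr :: "('i \<Rightarrow> real) \<Rightarrow> 'i set \<Rightarrow> ('i \<Rightarrow> real)" where
  "restr s J = (\<lambda>i. if i \<in> J then s i else 0)"

definition Kinf :: "(real \<Rightarrow> real) \<Rightarrow> bool" where
  "Kinf g \<longleftrightarrow> g 0 = 0 \<and> continuous_on {0..} g \<and> strict_mono_on {0..} g
     \<and> (\<forall>M. \<exists>r\<ge>0. M < g r)"

text \<open>Gain operator data: Iset i is the finite set of in-neighbours of i,
  gam i j is gamma_ij (for j in Iset i), mu i is mu_i.\<close>

definition gain_operator ::
  "('i \<Rightarrow> 'i set) \<Rightarrow> ('i \<Rightarrow> 'i \<Rightarrow> real \<Rightarrow> real) \<Rightarrow> ('i \<Rightarrow> ('i \<Rightarrow> real) \<Rightarrow> ennreal) \<Rightarrow> bool"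
where
  "gain_operator Iset gam mu \<longleftrightarrow>
     (\<forall>i. finite (Iset i) \<and> i \<notin> Iset i)
   \<and> (\<forall>i. \<forall>j\<in>Iset i. Kinf (gam i j))
   \<comment> \<open>pointwise equicontinuity of the family gamma_ij\<close>
   \<and> (\<forall>r\<ge>0. \<forall>\<epsilon>>0. \<exists>\<delta>>0. \<forall>i. \<forall>j\<in>Iset i. \<forall>r'\<ge>0.
        \<bar>r' - r\<bar> < \<delta> \<longrightarrow> \<bar>gam i j r' - gam i j r\<bar> < \<epsilon>)
   \<comment> \<open>(M1)\<close>
   \<and> (\<exists>\<xi>. Kinf \<xi> \<and> (\<forall>i. mu i (\<lambda>_. 0) = 0 \<and>
        (\<forall>s\<in>linf_plus. ennreal (\<xi> (supnorm s)) \<le> mu i s)))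
   \<comment> \<open>(M2)\<close>
   \<and> (\<forall>i. \<forall>s\<in>linf_plus. \<forall>t\<in>linf_plus. (\<forall>k. s k \<le> t k) \<longrightarrow> mu i s \<le> mu i t)
   \<comment> \<open>(M3)\<close>
   \<and> (\<forall>i. \<forall>J. finite J \<longrightarrow>
        (let V = {s\<in>linf_plus. \<forall>k. k \<notin> J \<longrightarrow> s k = 0} in
          (\<forall>s\<in>V. mu i s < \<infinity>) \<and>
          (\<forall>s\<in>V. \<forall>\<epsilon>>0. \<exists>\<delta>>0. \<forall>t\<in>V. supnorm (\<lambda>k. t k - s k) < \<delta> \<longrightarrow>
              \<bar>enn2real (mu i t) - enn2real (mu i s)\<bar> < \<epsilon>)))
   \<comment> \<open>(M4)\<close>
   \<and> (\<forall>A \<subseteq> linf_plus. (\<exists>R. \<forall>s\<in>A. supnorm s \<le> R) \<longrightarrow>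
        (\<forall>\<epsilon>>0. \<exists>\<delta>>0. \<forall>s0\<in>A. \<forall>s\<in>linf_plus. supnorm (\<lambda>k. s k - s0 k) \<le> \<delta> \<longrightarrow>
           (\<forall>i. \<bar>enn2real (mu i (restr s (Iset i))) - enn2real (mu i (restr s0 (Iset i)))\<bar> \<le> \<epsilon>)))"

text \<open>Gamma_i(s) = mu_i([gamma_ij(s_j)]_{j in I_i}); finite by (M3).\<close>
definition Gam ::
  "('i \<Rightarrow> 'i set) \<Rightarrow> ('i \<Rightarrow> 'i \<Rightarrow> real \<Rightarrow> real) \<Rightarrow> ('i \<Rightarrow> ('i \<Rightarrow> real) \<Rightarrow> ennreal)
     \<Rightarrow> ('i \<Rightarrow> real) \<Rightarrow> ('i \<Rightarrow> real)" where
  "Gam Iset gam mu s = (\<lambda>i. enn2real (mu i (\<lambda>j. if j \<in> Iset i then gam i j (s j) else 0)))"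

definition Psi :: "(('i \<Rightarrow> real) \<Rightarrow> ('i \<Rightarrow> real)) \<Rightarrow> ('i \<Rightarrow> real) set" where
  "Psi G = {s\<in>linf_plus. \<forall>i. G s i \<le> s i}"

definition GATT :: "(('i \<Rightarrow> real) \<Rightarrow> ('i \<Rightarrow> real)) \<Rightarrow> bool" where
  "GATT G \<longleftrightarrow> (\<forall>s\<in>linf_plus. (\<lambda>n. supnorm ((G ^^ n) s)) \<longlonglongrightarrow> 0)"

text \<open>weak-star closedness in ell-infinity = dual of ell-1: every point of ell-infinity
  outside A has a basic weak-star neighbourhood (finitely many ell-1 functionals) missing A.\<close>
definition weak_star_closed :: "('i \<Rightarrow> real) set \<Rightarrow> bool" where
  "weak_star_closed A \<longleftrightarrow> A \<subseteq> linf \<and>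
     (\<forall>s\<in>linf - A. \<exists>F. finite F \<and> (\<forall>a\<in>F. (\<lambda>i. norm (a i)) summable_on UNIV) \<and>
        (\<exists>\<epsilon>>0. \<forall>t\<in>A. \<exists>a\<in>F. \<epsilon> \<le> \<bar>infsum (\<lambda>i. a i * (t i - s i)) UNIV\<bar>))"

definition cofinal :: "('i \<Rightarrow> real) set \<Rightarrow> bool" where
  "cofinal A \<longleftrightarrow> (\<forall>s\<in>linf_plus. \<exists>t\<in>A. \<forall>i. s i \<le> t i)"

definition coercive :: "('i \<Rightarrow> real) set \<Rightarrow> bool" where
  "coercive A \<longleftrightarrow> (\<exists>\<phi>. Kinf \<phi> \<and> (\<forall>s\<in>A. \<forall>i. \<phi> (supnorm s) \<le> s i))"

definition interior_cone :: "('i \<Rightarrow> real) set" where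
  "interior_cone = {s\<in>linf_plus. \<exists>c>0. \<forall>i. c \<le> s i}"

definition assumption_A :: "('i \<Rightarrow> 'i set) \<Rightarrow> ('i \<Rightarrow> 'i \<Rightarrow> real \<Rightarrow> real) \<Rightarrow> bool" where
  "assumption_A Iset gam \<longleftrightarrow>
     (\<exists>\<eta>. Kinf \<eta> \<and> (\<forall>i. \<forall>j\<in>Iset i. \<forall>r\<ge>0. \<eta> r \<le> gam i j r)) \<and> (\<forall>i. Iset i \<noteq> {})"

definition path_of_decay :: "(('i \<Rightarrow> real) \<Rightarrow> ('i \<Rightarrow> real)) \<Rightarrow> (real \<Rightarrow> ('i \<Rightarrow> real)) \<Rightarrow> bool" where
  "path_of_decay G \<sigma> \<longleftrightarrow>
     (\<forall>r\<ge>0. \<sigma> r \<in> Psi G)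
   \<and> (\<exists>\<phi>min \<phi>max. Kinf \<phi>min \<and> Kinf \<phi>max \<and>
        (\<forall>r\<ge>0. \<forall>i. \<phi>min r \<le> \<sigma> r i \<and> \<sigma> r i \<le> \<phi>max r))
   \<and> (\<forall>r\<ge>0. \<forall>r'. r \<le> r' \<longrightarrow> (\<forall>i. \<sigma> r i \<le> \<sigma> r' i))
   \<and> (\<forall>r\<ge>0. \<forall>\<epsilon>>0. \<exists>\<delta>>0. \<forall>r'\<ge>0. \<bar>r' - r\<bar> < \<delta> \<longrightarrow> supnorm (\<lambda>i. \<sigma> r' i - \<sigma> r i) < \<epsilon>)"

text \<open>Linear interpolation of a bi-infinite sequence (s n), placing s n at the parameter
  2 powr (-n), and 0 at parameter 0.\<close>
definition interpolates :: "(int \<Rightarrow> ('i \<Rightarrow> real)) \<Rightarrow> (real \<Rightarrow> ('i \<Rightarrow> real)) \<Rightarrow> bool" where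
  "interpolates s \<sigma> \<longleftrightarrow> \<sigma> 0 = (\<lambda>_. 0) \<and>
     (\<forall>n::int. \<forall>\<theta>\<in>{0..1::real}.
        \<sigma> ((1 - \<theta>) * 2 powr (- real_of_int (n + 1)) + \<theta> * 2 powr (- real_of_int n))
          = (\<lambda>i. (1 - \<theta>) * s (n + 1) i + \<theta> * s n i))"

end

(*
  Coercivity of A and the lower gain bound \<Gamma>_i(s) \<ge> \<xi>(\<eta>(s_j)) give \<Gamma>_i(s) \<ge> \<rho>(\<parallel>s\<parallel>) on A,
  so a point of A whose orbit reaches the unit ball after n steps has norm at most some B_n that
  does not depend on the point. Cofinality provides points of A of arbitrarily large norm; shifting
  time so that their orbits enter the unit ball at time 0 yields orbit segments on [-k, \<infinity>) that
  are bounded uniformly in k at every fixed time. A diagonal (Tychonoff) limit of these segments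
  is a complete decreasing orbit: continuity of \<Gamma> under pointwise limits keeps the orbit
  relation, the coercivity inequality survives the limit, and a positive lower bound at time 0
  propagates forward through the gain bound. By global attractivity the norms tend to 0 in forward
  time and are unbounded in backward time, since a bounded backward limit would be a nonzero fixed
  point. Interpolating linearly on the dyadic grid r = 2^-n gives the path of decay: monotonicity
  of \<Gamma> keeps every interpolated point in \<Psi>(\<Gamma>), and the same interpolation of the
  step functions inf_i s_n and \<parallel>s_n\<parallel>, suitably made strictly monotone, gives the K\<infinity> bounds.
*)

theory Submission
  imports Defs
begin

section \<open>The positive cone of \<open>\<ell>\<^sup>\<infinity>\<close> and class-\<open>\<K>\<^sub>\<infinity>\<close> functions\<close>

lemma abs_le_supnorm: "bdd_above (range (\<lambda>i. \<bar>s i\<bar>)) \<Longrightarrow> \<bar>s i\<bar> \<le> supnorm s"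
  unfolding supnorm_def by (rule cSUP_upper) auto

lemma supnorm_le: "(\<And>i. \<bar>s i\<bar> \<le> M) \<Longrightarrow> supnorm s \<le> M"
  unfolding supnorm_def by (rule cSUP_least) auto

lemma linf_plusI: "(\<And>i. 0 \<le> s i) \<Longrightarrow> (\<And>i. s i \<le> M) \<Longrightarrow> s \<in> linf_plus"
  unfolding linf_plus_def by (auto intro!: bdd_aboveI[of _ M])

lemma linf_plus_nonneg: "s \<in> linf_plus \<Longrightarrow> 0 \<le> s i"
  by (auto simp: linf_plus_def)

lemma linf_plus_bdd_abs: "s \<in> linf_plus \<Longrightarrow> bdd_above (range (\<lambda>i. \<bar>s i\<bar>))"
  unfolding linf_plus_def by auto

lemma linf_plus_le_supnorm: "s \<in> linf_plus \<Longrightarrow> s i \<le> supnorm s"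
  using abs_le_supnorm[OF linf_plus_bdd_abs, of s i] by (auto simp: linf_plus_def)

lemma supnorm_nonneg: "s \<in> linf_plus \<Longrightarrow> 0 \<le> supnorm s"
  using linf_plus_le_supnorm[of s undefined] linf_plus_nonneg[of s undefined] by linarith

lemma supnorm_mono:
  assumes "s \<in> linf_plus" "t \<in> linf_plus" "\<And>i. s i \<le> t i"
  shows "supnorm s \<le> supnorm t"
proof (rule supnorm_le)
  fix i
  have "0 \<le> s i" by (rule linf_plus_nonneg[OF assms(1)])
  then show "\<bar>s i\<bar> \<le> supnorm t" using assms(3)[of i] linf_plus_le_supnorm[OF assms(2), of i] by simp
qed

lemma supnorm_le_sum:
  assumes "finite J" "\<And>k. k \<notin> J \<Longrightarrow> d k = 0"
  shows "supnorm d \<le> (\<Sum>k\<in>J. \<bar>d k\<bar>)"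
proof (rule supnorm_le)
  fix k show "\<bar>d k\<bar> \<le> (\<Sum>k\<in>J. \<bar>d k\<bar>)"
    using member_le_sum[of k J "\<lambda>k. \<bar>d k\<bar>"] assms sum_nonneg[of J "\<lambda>k. \<bar>d k\<bar>"]
    by (cases "k \<in> J") auto
qed

lemma INF_le_linf_plus: "s \<in> linf_plus \<Longrightarrow> (INF j. s j) \<le> s i"
  by (rule cINF_lower) (auto intro: bdd_belowI[of _ 0] linf_plus_nonneg)

lemma INF_pos_imp_interior_cone: "s \<in> linf_plus \<Longrightarrow> 0 < (INF j. s j) \<Longrightarrow> s \<in> interior_cone"
  unfolding interior_cone_def using INF_le_linf_plus[of s] by auto

lemma Kinf_strict: "Kinf g \<Longrightarrow> 0 \<le> x \<Longrightarrow> x < y \<Longrightarrow> g x < g y"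
  unfolding Kinf_def by (metis atLeast_iff order_le_less_trans order_less_imp_le strict_mono_onD)

lemma Kinf_mono: "Kinf g \<Longrightarrow> 0 \<le> x \<Longrightarrow> x \<le> y \<Longrightarrow> g x \<le> g y"
  using Kinf_strict[of g x y] by (cases "x = y") auto

lemma Kinf_pos: "Kinf g \<Longrightarrow> 0 < x \<Longrightarrow> 0 < g x"
  using Kinf_strict[of g 0 x] unfolding Kinf_def by auto

lemma Kinf_nonneg: "Kinf g \<Longrightarrow> 0 \<le> x \<Longrightarrow> 0 \<le> g x"
  using Kinf_pos[of g x] unfolding Kinf_def by (cases "x = 0") auto

lemma Kinf_unbounded: "Kinf g \<Longrightarrow> \<exists>r\<ge>0. M < g r"
  unfolding Kinf_def by auto

lemma Kinf_continuous_on: "Kinf g \<Longrightarrow> continuous_on {0..} g"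
  unfolding Kinf_def by auto

lemma Kinf_comp:
  assumes f: "Kinf f" and g: "Kinf g"
  shows "Kinf (f \<circ> g)"
  unfolding Kinf_def o_def
proof (intro conjI allI)
  show "f (g 0) = 0" using f g by (simp add: Kinf_def)
  show "continuous_on {0..} (\<lambda>r. f (g r))"
    using continuous_on_compose2[OF Kinf_continuous_on[OF f] Kinf_continuous_on[OF g]]
      Kinf_nonneg[OF g] by auto
  show "strict_mono_on {0..} (\<lambda>r. f (g r))"
    by (rule strict_mono_onI) (use f g Kinf_strict Kinf_nonneg in auto)
  fix M
  obtain a where a: "a \<ge> 0" "M < f a" using Kinf_unbounded[OF f] by blast
  obtain b where b: "b \<ge> 0" "a < g b" using Kinf_unbounded[OF g] by blast
  have "f a \<le> f (g b)" using Kinf_mono[OF f a(1)] b by auto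
  then show "\<exists>r\<ge>0. M < f (g r)" using a b by (intro exI[of _ b]) auto
qed

lemma Kinf_sublevel_bounded:
  assumes "Kinf g"
  obtains R where "\<And>c r. 0 \<le> r \<Longrightarrow> g r \<le> c \<Longrightarrow> r \<le> R c"
proof -
  have "\<exists>R. \<forall>r\<ge>0. g r \<le> c \<longrightarrow> r \<le> R" for c
  proof -
    obtain R where R: "R \<ge> 0" "c < g R" using Kinf_unbounded[OF assms] by blast
    have "r \<le> R" if "0 \<le> r" "g r \<le> c" for r
      using Kinf_strict[OF assms R(1), of r] R(2) that by (cases "R < r") auto
    then show ?thesis by blast
  qed
  then show ?thesis using that by metis
qed

lemma Kinf_supnorm_le:
  assumes g: "Kinf g" and s: "s \<in> linf_plus" and bound: "\<And>j. g (s j) \<le> c"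
  shows "g (supnorm s) \<le> c"
proof (rule ccontr)
  let ?S = "supnorm s"
  assume "\<not> g ?S \<le> c"
  then have gap: "0 < g ?S - c" by simp
  have "\<forall>e>0. \<exists>d>0. \<forall>y\<in>{0..}. dist y ?S < d \<longrightarrow> dist (g y) (g ?S) < e"
    using Kinf_continuous_on[OF g, unfolded continuous_on_iff] supnorm_nonneg[OF s] by simp
  from this[rule_format, OF gap]
  obtain d where d: "d > 0" "\<And>y. y \<in> {0..} \<Longrightarrow> dist y ?S < d \<Longrightarrow> dist (g y) (g ?S) < g ?S - c"
    by blast
  have "?S - d < (SUP j. \<bar>s j\<bar>)" using d(1) unfolding supnorm_def by simp
  then obtain j where j: "?S - d < \<bar>s j\<bar>"
    using less_cSUP_iff[of UNIV "\<lambda>j. \<bar>s j\<bar>"] linf_plus_bdd_abs[OF s] by auto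
  have "dist (s j) ?S < d"
    using j linf_plus_le_supnorm[OF s, of j] linf_plus_nonneg[OF s, of j] by (simp add: dist_real_def)
  then have "dist (g (s j)) (g ?S) < g ?S - c" using d(2) linf_plus_nonneg[OF s, of j] by simp
  then have "c < g (s j)" by (simp add: dist_real_def)
  then show False using bound[of j] by simp
qed

lemma antimono_int_step:
  fixes a :: "int \<Rightarrow> 'a::order"
  assumes step: "\<And>n. a (n + 1) \<le> a n" and "m \<le> n"
  shows "a n \<le> a m"
  using \<open>m \<le> n\<close>
proof (induction n rule: int_ge_induct)
  case (step i)
  then show ?case using assms(1)[of i] by (metis order_trans)
qed simp

section \<open>Piecewise-linear interpolation on the dyadic grid\<close>

definition dyadic :: "int \<Rightarrow> real" where "dyadic n = 2 powr (- real_of_int n)"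

definition dyadic_index :: "real \<Rightarrow> int" where "dyadic_index r = \<lfloor>- log 2 r\<rfloor>"

text \<open>On each cell \<open>{dyadic (n + 1)<..dyadic n}\<close> the interpolant is affine, running from
  \<open>a (n + 1)\<close> to \<open>a n\<close>; the cells of \<open>n \<in> \<int>\<close> partition \<open>{0<..}\<close> since
  \<open>dyadic n = 2 * dyadic (n + 1)\<close>.\<close>

definition dyadic_interp :: "(int \<Rightarrow> real) \<Rightarrow> real \<Rightarrow> real" where
  "dyadic_interp a r = (if r \<le> 0 then 0 else
     a (dyadic_index r + 1) + (r / dyadic (dyadic_index r + 1) - 1)
       * (a (dyadic_index r) - a (dyadic_index r + 1)))"

lemma dyadic_pos: "0 < dyadic n"
  by (simp add: dyadic_def)

lemma dyadic_double: "dyadic n = 2 * dyadic (n + 1)"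
  by (simp add: dyadic_def powr_diff powr_minus divide_simps)

lemma dyadic_nonzero [simp]: "dyadic n \<noteq> 0"
  using dyadic_pos[of n] by simp

lemma dyadic_less_iff [simp]: "dyadic n < dyadic m \<longleftrightarrow> m < n"
  by (simp add: dyadic_def)

lemma dyadic_le_iff [simp]: "dyadic n \<le> dyadic m \<longleftrightarrow> m \<le> n"
  by (simp add: dyadic_def)

lemma dyadic_index_bounds:
  assumes "0 < r"
  shows "dyadic (dyadic_index r + 1) < r" "r \<le> dyadic (dyadic_index r)"
proof -
  let ?n = "dyadic_index r"
  have "log 2 r \<le> - real_of_int ?n" "- real_of_int (?n + 1) < log 2 r"
    unfolding dyadic_index_def by linarith+
  then show "r \<le> dyadic ?n" "dyadic (?n + 1) < r"
    unfolding dyadic_def using log_le_iff[of 2 r] less_log_iff[of 2 r] assms by simp_all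
qed

lemma dyadic_index_unique:
  assumes "dyadic (n + 1) < r" "r \<le> dyadic n"
  shows "dyadic_index r = n"
proof -
  have r: "0 < r" using assms(1) dyadic_pos[of "n + 1"] by linarith
  have "log 2 r \<le> - real_of_int n" "- real_of_int (n + 1) < log 2 r"
    using assms unfolding dyadic_def using log_le_iff[of 2 r] less_log_iff[of 2 r] r by simp_all
  then show ?thesis unfolding dyadic_index_def by (intro floor_unique) auto
qed

lemma dyadic_index_antimono:
  assumes "0 < r" "r \<le> r'"
  shows "dyadic_index r' \<le> dyadic_index r"
  unfolding dyadic_index_def using assms by (intro floor_mono) simp

lemma dyadic_interp_zero [simp]: "dyadic_interp a 0 = 0"
  by (simp add: dyadic_interp_def)

lemma dyadic_interp_cell:
  assumes "dyadic (n + 1) < r" "r \<le> dyadic n"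
  shows "dyadic_interp a r = a (n + 1) + (r / dyadic (n + 1) - 1) * (a n - a (n + 1))"
  using dyadic_index_unique[OF assms] assms(1) dyadic_pos[of "n + 1"]
  by (simp add: dyadic_interp_def)

lemma dyadic_interp_closed_cell:
  assumes "dyadic (n + 1) \<le> r" "r \<le> dyadic n"
  shows "dyadic_interp a r = a (n + 1) + (r / dyadic (n + 1) - 1) * (a n - a (n + 1))"
proof (cases "r = dyadic (n + 1)")
  case True
  have "dyadic (n + 1 + 1) < r" "r \<le> dyadic (n + 1)" using True by simp_all
  moreover have "r / dyadic (n + 1 + 1) = 2" using True dyadic_double[of "n + 1"] dyadic_pos by simp
  ultimately show ?thesis using dyadic_interp_cell[of "n + 1" r a] True dyadic_pos[of "n + 1"] by simp
qed (use assms dyadic_interp_cell[of n r a] in simp)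

lemma dyadic_interp_affine:
  assumes "0 \<le> \<theta>" "\<theta> \<le> 1"
  shows "dyadic_interp a ((1 - \<theta>) * dyadic (n + 1) + \<theta> * dyadic n) = (1 - \<theta>) * a (n + 1) + \<theta> * a n"
proof -
  let ?r = "(1 - \<theta>) * dyadic (n + 1) + \<theta> * dyadic n"
  have pos: "0 < dyadic (n + 1)" by (rule dyadic_pos)
  have r: "?r = (1 + \<theta>) * dyadic (n + 1)" by (subst dyadic_double) algebra
  have "dyadic (n + 1) \<le> ?r" "?r \<le> dyadic n"
    unfolding r using assms pos by (auto simp: dyadic_double[of n])
  moreover have "?r / dyadic (n + 1) - 1 = \<theta>" unfolding r using pos by simp
  ultimately have "dyadic_interp a ?r = a (n + 1) + \<theta> * (a n - a (n + 1))"
    using dyadic_interp_closed_cell[of n ?r a] by simp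
  then show ?thesis by algebra
qed

lemma dyadic_interp_diff_closed_cell:
  assumes "dyadic (k + 1) \<le> x" "x \<le> dyadic k" "dyadic (k + 1) \<le> y" "y \<le> dyadic k"
  shows "\<bar>dyadic_interp a x - dyadic_interp a y\<bar> = \<bar>x - y\<bar> / dyadic (k + 1) * \<bar>a k - a (k + 1)\<bar>"
proof -
  have pos: "0 < dyadic (k + 1)" by (rule dyadic_pos)
  have "dyadic_interp a x - dyadic_interp a y = (x - y) / dyadic (k + 1) * (a k - a (k + 1))"
    unfolding dyadic_interp_closed_cell[OF assms(1,2)] dyadic_interp_closed_cell[OF assms(3,4)]
    using pos by (simp add: field_simps)
  then show ?thesis using pos by (simp add: abs_mult)
qed

lemma dyadic_interp_lipschitz:
  assumes r: "dyadic (n + 1) < r" "r \<le> dyadic n"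
    and r': "dyadic (n + 1) < r'" "r' \<le> dyadic (n - 1)"
    and D: "\<And>k. k \<in> {n - 1, n, n + 1} \<Longrightarrow> 0 \<le> a k \<and> a k \<le> D"
  shows "\<bar>dyadic_interp a r' - dyadic_interp a r\<bar> \<le> D / dyadic (n + 1) * \<bar>r' - r\<bar>"
proof -
  have pos: "0 < dyadic (n + 1)" by (rule dyadic_pos)
  have Pn: "dyadic n = 2 * dyadic (n + 1)" by (rule dyadic_double)
  have d1: "\<bar>a n - a (n + 1)\<bar> \<le> D" using D[of n] D[of "n + 1"] by auto
  have d2: "\<bar>a (n - 1) - a n\<bar> \<le> D" using D[of n] D[of "n - 1"] by auto
  show ?thesis
  proof (cases "r' \<le> dyadic n")
    case True
    have "\<bar>dyadic_interp a r' - dyadic_interp a r\<bar> = \<bar>r' - r\<bar> / dyadic (n + 1) * \<bar>a n - a (n + 1)\<bar>"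
      by (rule dyadic_interp_diff_closed_cell) (use r r' True in auto)
    also have "\<dots> \<le> \<bar>r' - r\<bar> / dyadic (n + 1) * D"
      by (rule mult_left_mono[OF d1]) (use pos in simp)
    finally show ?thesis by (simp add: field_simps)
  next
    case False
    \<comment> \<open>split at the grid point \<open>dyadic n\<close>; the left cell has twice the width\<close>
    have "\<bar>dyadic_interp a r' - dyadic_interp a (dyadic n)\<bar>
        = \<bar>r' - dyadic n\<bar> / dyadic n * \<bar>a (n - 1) - a n\<bar>"
      using dyadic_interp_diff_closed_cell[of "n - 1" r' "dyadic n"] False r' by simp
    also have "\<dots> \<le> (r' - dyadic n) / dyadic (n + 1) * D"
      using False pos Pn d2 by (intro mult_mono) (auto simp: field_simps)
    finally have A: "\<bar>dyadic_interp a r' - dyadic_interp a (dyadic n)\<bar> \<le> (r' - dyadic n) / dyadic (n + 1) * D" .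
    have "\<bar>dyadic_interp a (dyadic n) - dyadic_interp a r\<bar>
        = \<bar>dyadic n - r\<bar> / dyadic (n + 1) * \<bar>a n - a (n + 1)\<bar>"
      by (rule dyadic_interp_diff_closed_cell) (use r pos Pn in auto)
    also have "\<dots> \<le> (dyadic n - r) / dyadic (n + 1) * D"
      using r pos d1 by (intro mult_mono) auto
    finally have B: "\<bar>dyadic_interp a (dyadic n) - dyadic_interp a r\<bar> \<le> (dyadic n - r) / dyadic (n + 1) * D" .
    have "(r' - dyadic n) / dyadic (n + 1) * D + (dyadic n - r) / dyadic (n + 1) * D
        = D / dyadic (n + 1) * \<bar>r' - r\<bar>"
      using False r pos by (simp add: field_simps)
    then show ?thesis using A B by linarith
  qed
qed

context
  fixes a :: "int \<Rightarrow> real"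
  assumes antimono: "\<And>n. a (n + 1) \<le> a n"
begin

lemma dyadic_interp_cell_bounds:
  assumes "dyadic (n + 1) < r" "r \<le> dyadic n"
  shows "a (n + 1) \<le> dyadic_interp a r" "dyadic_interp a r \<le> a n"
proof -
  have pos: "0 < dyadic (n + 1)" by (rule dyadic_pos)
  have t0: "0 \<le> r / dyadic (n + 1) - 1" using assms(1) pos by (simp add: field_simps)
  have t1: "r / dyadic (n + 1) - 1 \<le> 1" using assms(2) pos dyadic_double[of n] by (simp add: field_simps)
  have d: "0 \<le> a n - a (n + 1)" using antimono[of n] by simp
  show "a (n + 1) \<le> dyadic_interp a r" unfolding dyadic_interp_cell[OF assms] using t0 d by simp
  have "(r / dyadic (n + 1) - 1) * (a n - a (n + 1)) \<le> 1 * (a n - a (n + 1))"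
    by (rule mult_right_mono[OF t1 d])
  then show "dyadic_interp a r \<le> a n" unfolding dyadic_interp_cell[OF assms] by simp
qed

lemma dyadic_interp_index_bounds:
  assumes "0 < r"
  shows "a (dyadic_index r + 1) \<le> dyadic_interp a r" "dyadic_interp a r \<le> a (dyadic_index r)"
  using dyadic_interp_cell_bounds[OF dyadic_index_bounds[OF assms]] by simp_all

context
  assumes nonneg: "\<And>n. 0 \<le> a n"
begin

lemma dyadic_interp_nonneg: "0 \<le> r \<Longrightarrow> 0 \<le> dyadic_interp a r"
  using dyadic_interp_index_bounds(1)[of r] nonneg[of "dyadic_index r + 1"]
  by (cases "r = 0") auto

lemma dyadic_interp_le_value:
  assumes "0 \<le> r" "r \<le> dyadic n"
  shows "dyadic_interp a r \<le> a n"
proof (cases "r = 0")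
  case False
  then have r: "0 < r" using assms(1) by simp
  have "dyadic (dyadic_index r + 1) < dyadic n" using dyadic_index_bounds(1)[OF r] assms(2) by linarith
  then have "a (dyadic_index r) \<le> a n" by (intro antimono_int_step[where a=a, OF antimono]) simp
  then show ?thesis using dyadic_interp_index_bounds(2)[OF r] by linarith
qed (use nonneg in simp)

lemma dyadic_interp_mono:
  assumes r: "0 \<le> r" "r \<le> r'"
  shows "dyadic_interp a r \<le> dyadic_interp a r'"
proof (cases "r = 0")
  case False
  then have r0: "0 < r" using r by simp
  let ?n = "dyadic_index r" and ?m = "dyadic_index r'"
  have r0': "0 < r'" using r r0 by linarith
  note bn = dyadic_index_bounds[OF r0] and bm = dyadic_index_bounds[OF r0']
  have "?m \<le> ?n" by (rule dyadic_index_antimono[OF r0 r(2)])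
  show ?thesis
  proof (cases "?m = ?n")
    case True
    have "r / dyadic (?n + 1) - 1 \<le> r' / dyadic (?n + 1) - 1"
      using r dyadic_pos[of "?n + 1"] by (simp add: divide_right_mono)
    moreover have "0 \<le> a ?n - a (?n + 1)" using antimono[of ?n] by simp
    ultimately show ?thesis
      unfolding dyadic_interp_cell[OF bn] dyadic_interp_cell[OF bm] True
      by (simp add: mult_right_mono)
  next
    case False
    then have "a ?n \<le> a (?m + 1)" using \<open>?m \<le> ?n\<close> by (intro antimono_int_step[where a=a, OF antimono]) simp
    then show ?thesis
      using dyadic_interp_cell_bounds(2)[OF bn] dyadic_interp_cell_bounds(1)[OF bm] by linarith
  qed
qed (use dyadic_interp_nonneg r in simp)

end

end

lemma dyadic_interp_strict_mono:
  assumes a: "\<And>n. a (n + 1) < a n" "\<And>n. 0 < a n" and r: "0 \<le> r" "r < r'"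
  shows "dyadic_interp a r < dyadic_interp a r'"
proof -
  have antimono: "\<And>n. a (n + 1) \<le> a n" using a(1) less_imp_le by blast
  have r0': "0 < r'" using r by linarith
  let ?m = "dyadic_index r'"
  note bm = dyadic_index_bounds[OF r0']
  have "0 < r' / dyadic (?m + 1) - 1" using bm dyadic_pos[of "?m + 1"] by (simp add: field_simps)
  then have gt: "a (?m + 1) < dyadic_interp a r'"
    unfolding dyadic_interp_cell[OF bm] using a(1)[of ?m] by simp
  show ?thesis
  proof (cases "r = 0")
    case False
    then have r0: "0 < r" using r by simp
    let ?n = "dyadic_index r"
    note bn = dyadic_index_bounds[OF r0]
    have "?m \<le> ?n" using dyadic_index_antimono[OF r0] r by simp
    show ?thesis
    proof (cases "?m = ?n")
      case True
      have "r / dyadic (?n + 1) - 1 < r' / dyadic (?n + 1) - 1"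
        using r dyadic_pos[of "?n + 1"] by (simp add: divide_strict_right_mono)
      moreover have "0 < a ?n - a (?n + 1)" using a(1)[of ?n] by simp
      ultimately show ?thesis
        unfolding dyadic_interp_cell[OF bn] dyadic_interp_cell[OF bm] True
        by (simp add: mult_strict_right_mono)
    next
      case False
      then have "a ?n \<le> a (?m + 1)"
        using \<open>?m \<le> ?n\<close> by (intro antimono_int_step[where a=a, OF antimono]) simp
      then show ?thesis using dyadic_interp_cell_bounds(2)[where a=a, OF antimono bn] gt by linarith
    qed
  qed (use gt a(2)[of "?m + 1"] in simp)
qed

lemma dyadic_interp_equicontinuous:
  fixes a :: "'j \<Rightarrow> int \<Rightarrow> real" and D :: "int \<Rightarrow> real"
  assumes nonneg: "\<And>j n. 0 \<le> a j n" and le: "\<And>j n. a j n \<le> D n"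
    and antimono: "\<And>j n. a j (n + 1) \<le> a j n" and small: "\<And>e. 0 < e \<Longrightarrow> \<exists>n. D n < e"
    and r: "0 \<le> r" and e: "0 < e"
  shows "\<exists>d>0. \<forall>r'\<ge>0. \<bar>r' - r\<bar> < d \<longrightarrow> (\<forall>j. \<bar>dyadic_interp (a j) r' - dyadic_interp (a j) r\<bar> \<le> e)"
proof (cases "r = 0")
  case True
  obtain n where n: "D n < e" using small e by blast
  have "\<bar>dyadic_interp (a j) r' - dyadic_interp (a j) r\<bar> \<le> e"
    if r': "0 \<le> r'" "\<bar>r' - r\<bar> < dyadic n" for r' j
    using dyadic_interp_le_value[where a="a j", OF antimono nonneg r'(1), of n]
      dyadic_interp_nonneg[where a="a j", OF antimono nonneg r'(1)]
      le[of j n] n r' True by simp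
  then show ?thesis using dyadic_pos[of n] by blast
next
  case False
  then have r0: "0 < r" using r by simp
  define n where "n = dyadic_index r"
  have bn: "dyadic (n + 1) < r" "r \<le> dyadic n" using dyadic_index_bounds[OF r0] unfolding n_def by auto
  have Dk: "0 \<le> a j k \<and> a j k \<le> D (n - 1)" if "k \<in> {n - 1, n, n + 1}" for j k
  proof -
    have "a j k \<le> a j (n - 1)" using that antimono_int_step[where a="a j", OF antimono] by auto
    then show ?thesis using nonneg le[of j "n - 1"] by (meson order_trans)
  qed
  define K where "K = D (n - 1) / dyadic (n + 1) + 1"
  have "0 \<le> D (n - 1) / dyadic (n + 1)" using Dk[of n undefined] dyadic_pos[of "n + 1"] by simp
  then have K: "0 < K" unfolding K_def by simp
  have gap: "r < dyadic (n - 1)" using bn dyadic_double[of "n - 1"] dyadic_pos[of n] by simp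
  define d where "d = min (min (r - dyadic (n + 1)) (dyadic (n - 1) - r)) (e / K)"
  have "\<bar>dyadic_interp (a j) r' - dyadic_interp (a j) r\<bar> \<le> e" if r': "\<bar>r' - r\<bar> < d" for r' j
  proof -
    have "\<bar>dyadic_interp (a j) r' - dyadic_interp (a j) r\<bar> \<le> D (n - 1) / dyadic (n + 1) * \<bar>r' - r\<bar>"
      by (rule dyadic_interp_lipschitz[OF bn]) (use r' Dk in \<open>auto simp: d_def\<close>)
    also have "\<dots> \<le> K * \<bar>r' - r\<bar>" unfolding K_def by (simp add: distrib_right)
    also have "\<dots> \<le> K * (e / K)" using r' K unfolding d_def by (intro mult_left_mono) auto
    finally show ?thesis using K by simp
  qed
  moreover have "0 < d" unfolding d_def using bn gap e K by simp
  ultimately show ?thesis by blast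
qed

lemma Kinf_dyadic_interp:
  assumes decr: "\<And>n. b (n + 1) < b n" and pos: "\<And>n. 0 < b n"
    and small: "\<And>e. 0 < e \<Longrightarrow> \<exists>n. b n < e" and big: "\<And>M. \<exists>n. M < b n"
  shows "Kinf (dyadic_interp b)"
  unfolding Kinf_def
proof (intro conjI allI)
  show "dyadic_interp b 0 = 0" by simp
  show "strict_mono_on {0..} (dyadic_interp b)"
    by (rule strict_mono_onI) (use dyadic_interp_strict_mono[where a=b, OF decr pos] in auto)
  have antimono: "\<And>n. b (n + 1) \<le> b n" and nonneg: "\<And>n. 0 \<le> b n"
    using decr pos less_imp_le by blast+
  show "continuous_on {0..} (dyadic_interp b)"
    unfolding continuous_on_iff
  proof (intro ballI allI impI)
    fix x e :: real assume x: "x \<in> {0..}" and e: "0 < e"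
    obtain d where d: "d > 0"
      "\<And>x'. x' \<ge> 0 \<Longrightarrow> \<bar>x' - x\<bar> < d \<Longrightarrow> \<bar>dyadic_interp b x' - dyadic_interp b x\<bar> \<le> e / 2"
      using dyadic_interp_equicontinuous[of "\<lambda>_::unit. b" b x "e / 2"] antimono nonneg small x e by auto
    show "\<exists>d>0. \<forall>x'\<in>{0..}. dist x' x < d \<longrightarrow> dist (dyadic_interp b x') (dyadic_interp b x) < e"
    proof (intro exI[of _ d] conjI ballI impI)
      fix x' :: real assume "x' \<in> {0..}" "dist x' x < d"
      then show "dist (dyadic_interp b x') (dyadic_interp b x) < e"
        using d(2)[of x'] e by (simp add: dist_real_def)
    qed (rule d(1))
  qed
  fix M
  obtain n where n: "M < b n" using big by blast
  have "dyadic_interp b (dyadic n) = b n"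
    using dyadic_interp_closed_cell[of "n - 1" "dyadic n" b] dyadic_double[of "n - 1"] dyadic_pos[of n]
    by simp
  then show "\<exists>r\<ge>0. M < dyadic_interp b r" using n dyadic_pos[of n] by (intro exI[of _ "dyadic n"]) auto
qed

lemma Kinf_below_steps:
  fixes c :: "int \<Rightarrow> real"
  assumes antimono: "\<And>n. c (n + 1) \<le> c n" and pos: "\<And>n. 0 < c n"
    and small: "\<And>e. 0 < e \<Longrightarrow> \<exists>n. c n < e" and big: "\<And>M. \<exists>n. M < c n"
  obtains \<phi> where "Kinf \<phi>" "\<And>r. 0 < r \<Longrightarrow> \<phi> r \<le> c (dyadic_index r + 1)"
proof -
  \<comment> \<open>\<open>h\<close> makes the steps strictly decreasing while staying in \<open>[1/2, 1)\<close> for \<open>n \<le> 0\<close>\<close>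
  define h where "h n = dyadic n / (1 + dyadic n)" for n
  define b where "b n = c (n + 1) * h n" for n
  have h_pos: "0 < h n" and h_lt1: "h n < 1" for n
    unfolding h_def using dyadic_pos[of n] by simp_all
  have h_decr: "h (n + 1) < h n" for n
    unfolding h_def using dyadic_pos[of n] dyadic_pos[of "n + 1"] by (simp add: field_simps)
  have h_half: "1 / 2 \<le> h n" if "n \<le> 0" for n
  proof -
    have "1 \<le> dyadic n" using that dyadic_le_iff[of 0 n] by (simp add: dyadic_def)
    then show ?thesis unfolding h_def by (simp add: field_simps)
  qed
  have b_le: "b n \<le> c (n + 1)" for n
    unfolding b_def using pos[of "n + 1"] h_lt1[of n] by (simp add: mult_le_cancel_left1)
  have b_decr: "b (n + 1) < b n" for n
  proof -
    have "c (n + 1 + 1) * h (n + 1) \<le> c (n + 1) * h (n + 1)"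
      using antimono[of "n + 1"] h_pos[of "n + 1"] by (intro mult_right_mono) simp_all
    also have "\<dots> < c (n + 1) * h n" by (rule mult_strict_left_mono[OF h_decr pos])
    finally show ?thesis unfolding b_def .
  qed
  have b_pos: "0 < b n" for n unfolding b_def using pos h_pos by simp
  have b_small: "\<exists>n. b n < e" if e: "0 < e" for e
  proof -
    obtain n where "c n < e" using small[OF e] by blast
    then have "b (n - 1) < e" using b_le[of "n - 1"] by simp
    then show ?thesis by blast
  qed
  have b_big: "\<exists>n. M < b n" for M
  proof -
    obtain n0 where n0: "2 * \<bar>M\<bar> < c n0" using big by blast
    define m where "m = min n0 1 - 1"
    have "c n0 \<le> c (m + 1)" unfolding m_def by (rule antimono_int_step[where a=c, OF antimono]) simp
    moreover have "1 / 2 \<le> h m" by (rule h_half) (simp add: m_def)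
    moreover have "c (m + 1) * (1 / 2) \<le> c (m + 1) * h m"
      using \<open>1 / 2 \<le> h m\<close> pos[of "m + 1"] by (intro mult_left_mono) simp_all
    ultimately have "c n0 / 2 \<le> b m" unfolding b_def by linarith
    then show ?thesis using n0 by (intro exI[of _ m]) linarith
  qed
  have "Kinf (dyadic_interp b)" by (rule Kinf_dyadic_interp[OF b_decr b_pos b_small b_big])
  moreover have "dyadic_interp b r \<le> c (dyadic_index r + 1)" if "0 < r" for r
    using dyadic_interp_index_bounds(2)[where a=b, OF less_imp_le[OF b_decr] that] b_le by (rule order_trans)
  ultimately show ?thesis using that by blast
qed

lemma Kinf_above_steps:
  fixes C :: "int \<Rightarrow> real"
  assumes antimono: "\<And>n. C (n + 1) \<le> C n" and pos: "\<And>n. 0 < C n"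
    and small: "\<And>e. 0 < e \<Longrightarrow> \<exists>n. C n < e" and big: "\<And>M. \<exists>n. M < C n"
  obtains \<psi> where "Kinf \<psi>" "\<And>r. 0 < r \<Longrightarrow> C (dyadic_index r) \<le> \<psi> r"
proof -
  define b where "b n = C (n - 1) * (1 + dyadic n)" for n
  have b_ge: "C n \<le> b (n + 1)" for n
    unfolding b_def using pos[of n] dyadic_pos[of "n + 1"] by simp
  have b_decr: "b (n + 1) < b n" for n
  proof -
    have "C n * (1 + dyadic (n + 1)) \<le> C (n - 1) * (1 + dyadic (n + 1))"
      using antimono[of "n - 1"] dyadic_pos[of "n + 1"] by (intro mult_right_mono) simp_all
    also have "\<dots> < C (n - 1) * (1 + dyadic n)"
      using pos[of "n - 1"] by (intro mult_strict_left_mono) simp_all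
    finally show ?thesis unfolding b_def by simp
  qed
  have b_pos: "0 < b n" for n unfolding b_def using pos dyadic_pos by (simp add: add_pos_pos)
  have b_small: "\<exists>n. b n < e" if e: "0 < e" for e
  proof -
    obtain N where N: "C N < e / 2" using small[of "e / 2"] e by auto
    define N' where "N' = max N 0"
    have "C N' \<le> C N" unfolding N'_def by (rule antimono_int_step[where a=C, OF antimono]) simp
    moreover have "dyadic (N' + 1) \<le> 1" using dyadic_le_iff[of "N' + 1" 0] by (simp add: dyadic_def N'_def)
    then have "b (N' + 1) \<le> C N' * 2" unfolding b_def using pos[of N'] by simp
    ultimately show ?thesis using N by (intro exI[of _ "N' + 1"]) linarith
  qed
  have b_big: "\<exists>n. M < b n" for M
  proof -
    obtain n where "M < C n" using big by blast
    then have "M < b (n + 1)" using b_ge[of n] by linarith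
    then show ?thesis by blast
  qed
  have "Kinf (dyadic_interp b)" by (rule Kinf_dyadic_interp[OF b_decr b_pos b_small b_big])
  moreover have "C (dyadic_index r) \<le> dyadic_interp b r" if "0 < r" for r
    using b_ge dyadic_interp_index_bounds(1)[where a=b, OF less_imp_le[OF b_decr] that] by (rule order_trans)
  ultimately show ?thesis using that by blast
qed

definition dyadic_path :: "(int \<Rightarrow> 'i \<Rightarrow> real) \<Rightarrow> real \<Rightarrow> 'i \<Rightarrow> real" where
  "dyadic_path s r i = dyadic_interp (\<lambda>n. s n i) r"

lemma interpolates_dyadic_path: "interpolates s (dyadic_path s)"
  unfolding interpolates_def
proof (intro conjI allI ballI)
  show "dyadic_path s 0 = (\<lambda>_. 0)" by (simp add: dyadic_path_def fun_eq_iff)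
  fix n :: int and \<theta> :: real assume "\<theta> \<in> {0..1}"
  then show "dyadic_path s ((1 - \<theta>) * 2 powr (- real_of_int (n + 1)) + \<theta> * 2 powr (- real_of_int n))
      = (\<lambda>i. (1 - \<theta>) * s (n + 1) i + \<theta> * s n i)"
    using dyadic_interp_affine[of \<theta>] by (simp add: dyadic_path_def dyadic_def fun_eq_iff)
qed

context
  fixes s :: "int \<Rightarrow> 'i \<Rightarrow> real"
  assumes lp: "\<And>n. s n \<in> linf_plus" and decr: "\<And>n i. s (n + 1) i \<le> s n i"
begin

lemma dyadic_path_cell_bounds:
  assumes "0 < r"
  shows "s (dyadic_index r + 1) i \<le> dyadic_path s r i" "dyadic_path s r i \<le> s (dyadic_index r) i"
  unfolding dyadic_path_def
  using dyadic_interp_index_bounds[where a="\<lambda>n. s n i", OF decr assms] by simp_all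

lemma dyadic_path_linf_plus:
  assumes "0 < r"
  shows "dyadic_path s r \<in> linf_plus"
proof (rule linf_plusI)
  let ?n = "dyadic_index r"
  show "0 \<le> dyadic_path s r i" for i
    using dyadic_path_cell_bounds(1)[OF assms, of i] linf_plus_nonneg[OF lp, of "?n + 1" i] by linarith
  show "dyadic_path s r i \<le> supnorm (s ?n)" for i
    using dyadic_path_cell_bounds(2)[OF assms, of i] linf_plus_le_supnorm[OF lp, of ?n i] by linarith
qed

lemma dyadic_path_in_Psi:
  assumes T_mono: "\<And>x y i. (\<And>j. 0 \<le> x j) \<Longrightarrow> (\<And>j. x j \<le> y j) \<Longrightarrow> T x i \<le> T y i"
    and T_zero: "T (\<lambda>_. 0) = (\<lambda>_. 0)" and step: "\<And>n. s (n + 1) = T (s n)"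
    and r: "0 \<le> r"
  shows "dyadic_path s r \<in> Psi T"
proof (cases "r = 0")
  case True
  have "dyadic_path s 0 = (\<lambda>_. 0)" by (simp add: dyadic_path_def fun_eq_iff)
  moreover have "(\<lambda>_. 0) \<in> linf_plus" by (rule linf_plusI) auto
  ultimately show ?thesis using True T_zero by (simp add: Psi_def)
next
  case False
  then have r: "0 < r" using r by simp
  let ?n = "dyadic_index r"
  note lp_r = dyadic_path_linf_plus[OF r]
  have "T (dyadic_path s r) i \<le> dyadic_path s r i" for i
  proof -
    have "T (dyadic_path s r) i \<le> T (s ?n) i"
      by (rule T_mono) (use linf_plus_nonneg[OF lp_r] dyadic_path_cell_bounds(2)[OF r] in auto)
    also have "\<dots> = s (?n + 1) i" by (simp add: step)
    also have "\<dots> \<le> dyadic_path s r i" by (rule dyadic_path_cell_bounds(1)[OF r])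
    finally show ?thesis .
  qed
  then show ?thesis using lp_r by (simp add: Psi_def)
qed

lemma dyadic_path_mono: "0 \<le> r \<Longrightarrow> r \<le> r' \<Longrightarrow> dyadic_path s r i \<le> dyadic_path s r' i"
  unfolding dyadic_path_def
  by (rule dyadic_interp_mono[where a="\<lambda>n. s n i", OF decr linf_plus_nonneg[OF lp]])

context
  assumes small: "\<And>e. 0 < e \<Longrightarrow> \<exists>n. supnorm (s n) < e"
begin

lemma dyadic_path_continuous:
  assumes r: "0 \<le> r" and e: "0 < e"
  shows "\<exists>d>0. \<forall>r'\<ge>0. \<bar>r' - r\<bar> < d \<longrightarrow> supnorm (\<lambda>i. dyadic_path s r' i - dyadic_path s r i) < e"
proof -
  obtain d where d: "d > 0" "\<And>r' i. r' \<ge> 0 \<Longrightarrow> \<bar>r' - r\<bar> < d \<Longrightarrow>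
      \<bar>dyadic_interp (\<lambda>n. s n i) r' - dyadic_interp (\<lambda>n. s n i) r\<bar> \<le> e / 2"
    using dyadic_interp_equicontinuous[of "\<lambda>i n. s n i" "\<lambda>n. supnorm (s n)" r "e / 2"]
      linf_plus_nonneg[OF lp] linf_plus_le_supnorm[OF lp] decr small r e by auto
  have "supnorm (\<lambda>i. dyadic_path s r' i - dyadic_path s r i) < e" if "0 \<le> r'" "\<bar>r' - r\<bar> < d" for r'
  proof -
    have "supnorm (\<lambda>i. dyadic_path s r' i - dyadic_path s r i) \<le> e / 2"
      unfolding dyadic_path_def by (rule supnorm_le) (rule d(2)[OF that])
    then show ?thesis using e by linarith
  qed
  then show ?thesis using d(1) by blast
qed

lemma dyadic_path_Kinf_bounds:
  assumes pos: "\<And>n. 0 < (INF i. s n i)" and big: "\<And>M. \<exists>n. M < (INF i. s n i)"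
  shows "\<exists>\<phi>min \<phi>max. Kinf \<phi>min \<and> Kinf \<phi>max \<and>
    (\<forall>r\<ge>0. \<forall>i. \<phi>min r \<le> dyadic_path s r i \<and> dyadic_path s r i \<le> \<phi>max r)"
proof -
  let ?lo = "\<lambda>n. INF i. s n i" and ?hi = "\<lambda>n. supnorm (s n)"
  have lo_le: "?lo n \<le> s n i" for n i by (rule INF_le_linf_plus[OF lp])
  have lo_le_hi: "?lo n \<le> ?hi n" for n by (rule order_trans[OF lo_le linf_plus_le_supnorm[OF lp]])
  have lo_antimono: "?lo (n + 1) \<le> ?lo n" for n
  proof (rule cINF_greatest)
    show "?lo (n + 1) \<le> s n i" for i using lo_le[of "n + 1" i] decr[of n i] by linarith
  qed simp
  have hi_antimono: "?hi (n + 1) \<le> ?hi n" for n by (rule supnorm_mono[OF lp lp decr])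
  have lo_small: "\<exists>n. ?lo n < e" if "0 < e" for e using small[OF that] lo_le_hi by (meson le_less_trans)
  have hi_pos: "0 < ?hi n" for n using pos[of n] lo_le_hi[of n] by linarith
  have hi_big: "\<exists>n. M < ?hi n" for M using big[of M] lo_le_hi by (meson less_le_trans)
  obtain \<phi>min where \<phi>min: "Kinf \<phi>min" "\<And>r. 0 < r \<Longrightarrow> \<phi>min r \<le> ?lo (dyadic_index r + 1)"
    using Kinf_below_steps[of ?lo, OF lo_antimono pos lo_small big] by blast
  obtain \<phi>max where \<phi>max: "Kinf \<phi>max" "\<And>r. 0 < r \<Longrightarrow> ?hi (dyadic_index r) \<le> \<phi>max r"
    using Kinf_above_steps[of ?hi, OF hi_antimono hi_pos small hi_big] by blast
  have "\<phi>min r \<le> dyadic_path s r i \<and> dyadic_path s r i \<le> \<phi>max r" if r: "0 \<le> r" for r i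
  proof (cases "r = 0")
    case True
    then show ?thesis using \<phi>min(1) \<phi>max(1) by (simp add: Kinf_def dyadic_path_def)
  next
    case False
    then have r: "0 < r" using r by simp
    let ?n = "dyadic_index r"
    show ?thesis
      using \<phi>min(2)[OF r] lo_le[of "?n + 1" i] dyadic_path_cell_bounds[OF r, of i]
        \<phi>max(2)[OF r] linf_plus_le_supnorm[OF lp, of ?n i]
      by linarith
  qed
  then show ?thesis using \<phi>min(1) \<phi>max(1) by blast
qed

end

end

lemma path_of_decay_dyadic_path:
  fixes T :: "('i \<Rightarrow> real) \<Rightarrow> 'i \<Rightarrow> real" and s :: "int \<Rightarrow> 'i \<Rightarrow> real"
  assumes T_mono: "\<And>x y i. (\<And>j. 0 \<le> x j) \<Longrightarrow> (\<And>j. x j \<le> y j) \<Longrightarrow> T x i \<le> T y i"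
    and T_zero: "T (\<lambda>_. 0) = (\<lambda>_. 0)"
    and lp: "\<And>n. s n \<in> linf_plus" and step: "\<And>n. s (n + 1) = T (s n)"
    and decr: "\<And>n i. s (n + 1) i \<le> s n i"
    and pos: "\<And>n. 0 < (INF i. s n i)" and big: "\<And>M. \<exists>n. M < (INF i. s n i)"
    and small: "\<And>e. 0 < e \<Longrightarrow> \<exists>n. supnorm (s n) < e"
  shows "path_of_decay T (dyadic_path s)"
  unfolding path_of_decay_def
proof (intro conjI allI impI)
  show "dyadic_path s r \<in> Psi T" if "0 \<le> r" for r
    by (rule dyadic_path_in_Psi[where s=s, OF lp decr T_mono T_zero step that])
  show "dyadic_path s r i \<le> dyadic_path s r' i" if "0 \<le> r" "r \<le> r'" for r r' i
    by (rule dyadic_path_mono[where s=s, OF lp decr that])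
  show "\<exists>\<delta>>0. \<forall>r'\<ge>0. \<bar>r' - r\<bar> < \<delta> \<longrightarrow> supnorm (\<lambda>i. dyadic_path s r' i - dyadic_path s r i) < \<epsilon>"
    if "0 \<le> r" "0 < \<epsilon>" for r \<epsilon>
    by (rule dyadic_path_continuous[where s=s, OF lp decr small that])
qed (rule dyadic_path_Kinf_bounds[where s=s, OF lp decr small pos big])

section \<open>The gain operator\<close>

definition gain_arg ::
  "('i \<Rightarrow> 'i set) \<Rightarrow> ('i \<Rightarrow> 'i \<Rightarrow> real \<Rightarrow> real) \<Rightarrow> 'i \<Rightarrow> ('i \<Rightarrow> real) \<Rightarrow> ('i \<Rightarrow> real)"
  where "gain_arg Iset gam i s = (\<lambda>j. if j \<in> Iset i then gam i j (s j) else 0)"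

lemma Gam_eq_gain_arg: "Gam Iset gam mu s i = enn2real (mu i (gain_arg Iset gam i s))"
  by (simp add: Gam_def gain_arg_def)

context
  fixes Iset :: "'i \<Rightarrow> 'i set" and gam :: "'i \<Rightarrow> 'i \<Rightarrow> real \<Rightarrow> real"
    and mu :: "'i \<Rightarrow> ('i \<Rightarrow> real) \<Rightarrow> ennreal"
  assumes gain: "gain_operator Iset gam mu"
begin

lemma gain_finite: "finite (Iset i)"
  using gain unfolding gain_operator_def by (elim conjE) blast

lemma gain_Kinf: "j \<in> Iset i \<Longrightarrow> Kinf (gam i j)"
  using gain unfolding gain_operator_def by (elim conjE) blast

lemma gain_M1: "\<exists>\<xi>. Kinf \<xi> \<and> (\<forall>i. mu i (\<lambda>_. 0) = 0 \<and>
    (\<forall>s\<in>linf_plus. ennreal (\<xi> (supnorm s)) \<le> mu i s))"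
  using gain unfolding gain_operator_def by (elim conjE) assumption

lemma gain_lower: "\<exists>\<xi>. Kinf \<xi> \<and> (\<forall>i. \<forall>s\<in>linf_plus. ennreal (\<xi> (supnorm s)) \<le> mu i s)"
  using gain_M1 by blast

lemma gain_mu_zero: "mu i (\<lambda>_. 0) = 0"
  using gain_M1 by blast

lemma gain_mono:
  "s \<in> linf_plus \<Longrightarrow> t \<in> linf_plus \<Longrightarrow> (\<And>k. s k \<le> t k) \<Longrightarrow> mu i s \<le> mu i t"
  using gain unfolding gain_operator_def by (elim conjE) blast

lemma gain_finite_support:
  assumes "finite J"
  defines "V \<equiv> {s \<in> linf_plus. \<forall>k. k \<notin> J \<longrightarrow> s k = 0}"
  shows "s \<in> V \<Longrightarrow> mu i s < \<infinity>"
    and "s \<in> V \<Longrightarrow> 0 < \<epsilon> \<Longrightarrow> \<exists>\<delta>>0. \<forall>t\<in>V. supnorm (\<lambda>k. t k - s k) < \<delta> \<longrightarrow>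
           \<bar>enn2real (mu i t) - enn2real (mu i s)\<bar> < \<epsilon>"
proof -
  have "\<forall>i. \<forall>J. finite J \<longrightarrow> (let V = {s \<in> linf_plus. \<forall>k. k \<notin> J \<longrightarrow> s k = 0} in
      (\<forall>s\<in>V. mu i s < \<infinity>) \<and>
      (\<forall>s\<in>V. \<forall>\<epsilon>>0. \<exists>\<delta>>0. \<forall>t\<in>V. supnorm (\<lambda>k. t k - s k) < \<delta> \<longrightarrow>
          \<bar>enn2real (mu i t) - enn2real (mu i s)\<bar> < \<epsilon>))"
    using gain unfolding gain_operator_def by (elim conjE) assumption
  note this[rule_format, where i=i and J=J, OF \<open>finite J\<close>, unfolded Let_def V_def[symmetric]]
  then show "s \<in> V \<Longrightarrow> mu i s < \<infinity>"
    and "s \<in> V \<Longrightarrow> 0 < \<epsilon> \<Longrightarrow> \<exists>\<delta>>0. \<forall>t\<in>V. supnorm (\<lambda>k. t k - s k) < \<delta> \<longrightarrow>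
           \<bar>enn2real (mu i t) - enn2real (mu i s)\<bar> < \<epsilon>"
    by blast+
qed

lemma gain_arg_finite_support:
  assumes s: "\<And>j. 0 \<le> s j"
  shows "gain_arg Iset gam i s \<in> {t \<in> linf_plus. \<forall>k. k \<notin> Iset i \<longrightarrow> t k = 0}"
proof -
  have nonneg: "0 \<le> gain_arg Iset gam i s j" for j
    using Kinf_nonneg[OF gain_Kinf] s by (simp add: gain_arg_def)
  have "gain_arg Iset gam i s j \<le> (\<Sum>k\<in>Iset i. gam i k (s k))" for j
    using member_le_sum[of j "Iset i" "\<lambda>k. gam i k (s k)"] sum_nonneg[of "Iset i" "\<lambda>k. gam i k (s k)"]
      gain_finite Kinf_nonneg[OF gain_Kinf] s
    by (auto simp: gain_arg_def)
  then have "gain_arg Iset gam i s \<in> linf_plus" using nonneg by (intro linf_plusI)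
  then show ?thesis by (simp add: gain_arg_def)
qed

lemma gain_arg_linf_plus: "(\<And>j. 0 \<le> s j) \<Longrightarrow> gain_arg Iset gam i s \<in> linf_plus"
  using gain_arg_finite_support by simp

lemma mu_gain_arg_finite: "(\<And>j. 0 \<le> s j) \<Longrightarrow> mu i (gain_arg Iset gam i s) < \<infinity>"
  by (rule gain_finite_support(1)[OF gain_finite gain_arg_finite_support])

lemma Gam_mono:
  assumes s: "\<And>j. 0 \<le> s j" and st: "\<And>j. s j \<le> t j"
  shows "Gam Iset gam mu s i \<le> Gam Iset gam mu t i"
proof -
  have t: "0 \<le> t j" for j using s[of j] st[of j] by linarith
  have "gain_arg Iset gam i s k \<le> gain_arg Iset gam i t k" for k
    using Kinf_mono[OF gain_Kinf, of k i "s k" "t k"] s st by (simp add: gain_arg_def)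
  then have "mu i (gain_arg Iset gam i s) \<le> mu i (gain_arg Iset gam i t)"
    by (intro gain_mono gain_arg_linf_plus s t)
  then show ?thesis
    unfolding Gam_eq_gain_arg using mu_gain_arg_finite[OF t] by (simp add: enn2real_mono)
qed

lemma Gam_zero: "Gam Iset gam mu (\<lambda>_. 0) = (\<lambda>_. 0)"
proof
  fix i
  have "gain_arg Iset gam i (\<lambda>_. 0) = (\<lambda>_. 0)"
    using gain_Kinf by (auto simp: gain_arg_def Kinf_def)
  then show "Gam Iset gam mu (\<lambda>_. 0) i = 0" unfolding Gam_eq_gain_arg by (simp add: gain_mu_zero)
qed

lemma Gam_ge_gain:
  assumes s: "\<And>j. 0 \<le> s j" and j: "j \<in> Iset i"
    and \<xi>: "Kinf \<xi>" "\<And>i s. s \<in> linf_plus \<Longrightarrow> ennreal (\<xi> (supnorm s)) \<le> mu i s"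
  shows "\<xi> (gam i j (s j)) \<le> Gam Iset gam mu s i"
proof -
  let ?u = "gain_arg Iset gam i s"
  have u: "?u \<in> linf_plus" by (rule gain_arg_linf_plus[of s, OF s])
  have "gam i j (s j) \<le> supnorm ?u"
    using linf_plus_le_supnorm[OF u, of j] j by (simp add: gain_arg_def)
  then have "\<xi> (gam i j (s j)) \<le> \<xi> (supnorm ?u)"
    using Kinf_mono[OF \<xi>(1) Kinf_nonneg[OF gain_Kinf[OF j] s[of j]]] by blast
  also have "\<dots> \<le> enn2real (mu i ?u)"
  proof -
    have "enn2real (ennreal (\<xi> (supnorm ?u))) \<le> enn2real (mu i ?u)"
      using \<xi>(2)[OF u] mu_gain_arg_finite[of s i, OF s] by (intro enn2real_mono) simp_all
    then show ?thesis using Kinf_nonneg[OF \<xi>(1) supnorm_nonneg[OF u]] by simp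
  qed
  finally show ?thesis unfolding Gam_eq_gain_arg .
qed

text \<open>Only (M3) is needed: the argument of \<open>mu i\<close> is supported on the finite set \<open>Iset i\<close>,
  where pointwise and uniform convergence coincide.\<close>

lemma Gam_pointwise_continuous:
  assumes x: "\<And>k j. 0 \<le> x k j" and lim: "\<And>j. (\<lambda>k. x k j) \<longlonglongrightarrow> y j"
  shows "(\<lambda>k. Gam Iset gam mu (x k) i) \<longlonglongrightarrow> Gam Iset gam mu y i"
proof -
  let ?V = "{s \<in> linf_plus. \<forall>k. k \<notin> Iset i \<longrightarrow> s k = 0}"
  let ?u = "\<lambda>k. gain_arg Iset gam i (x k)" and ?v = "gain_arg Iset gam i y"
  have y: "0 \<le> y j" for j by (rule LIMSEQ_le_const[OF lim]) (use x in auto)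
  have coord: "(\<lambda>k. ?u k j) \<longlonglongrightarrow> ?v j" for j
  proof (cases "j \<in> Iset i")
    case True
    have "(\<lambda>k. gam i j (x k j)) \<longlonglongrightarrow> gam i j (y j)"
      by (rule continuous_on_tendsto_compose[OF Kinf_continuous_on[OF gain_Kinf[OF True]] lim])
         (use y x in auto)
    then show ?thesis using True by (simp add: gain_arg_def)
  qed (simp add: gain_arg_def)
  have dist_lim: "(\<lambda>k. \<Sum>j\<in>Iset i. \<bar>?u k j - ?v j\<bar>) \<longlonglongrightarrow> 0"
    by (intro tendsto_null_sum tendsto_rabs_zero LIM_zero coord)
  show ?thesis
    unfolding Gam_eq_gain_arg
  proof (rule LIMSEQ_I)
    fix e :: real assume e: "0 < e"
    obtain d where d: "d > 0"
      "\<And>t. t \<in> ?V \<Longrightarrow> supnorm (\<lambda>k. t k - ?v k) < d \<Longrightarrow> \<bar>enn2real (mu i t) - enn2real (mu i ?v)\<bar> < e"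
      using gain_finite_support(2)[OF gain_finite gain_arg_finite_support[of y, OF y] e] by blast
    obtain N where N: "\<And>k. k \<ge> N \<Longrightarrow> \<bar>\<Sum>j\<in>Iset i. \<bar>?u k j - ?v j\<bar>\<bar> < d"
      using LIMSEQ_D[OF dist_lim d(1)] by auto
    have "supnorm (\<lambda>j. ?u k j - ?v j) < d" if "N \<le> k" for k
      using supnorm_le_sum[OF gain_finite[of i], where d="\<lambda>j. ?u k j - ?v j"] N[OF that]
      by (simp add: gain_arg_def)
    moreover have "?u k \<in> ?V" for k by (rule gain_arg_finite_support[of "x k"]) (rule x)
    ultimately show "\<exists>N. \<forall>k\<ge>N. norm (enn2real (mu i (?u k)) - enn2real (mu i ?v)) < e"
      using d(2) by (intro exI[of _ N] allI impI) auto
  qed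
qed

end

section \<open>Complete orbits of a globally attractive operator\<close>

lemma bounded_seq_pointwise_convergent_subseq:
  fixes f :: "nat \<Rightarrow> 'a::countable \<Rightarrow> real"
  assumes bound: "\<And>k x. \<bar>f k x\<bar> \<le> B x"
  obtains r l where "strict_mono r" "\<And>x. (\<lambda>k. f (r k) x) \<longlonglongrightarrow> l x"
proof -
  define S where "S = PiE UNIV (\<lambda>x. {- B x..B x})"
  have "compactin (product_topology (\<lambda>x. euclidean) UNIV) S"
    unfolding S_def by (subst compactin_PiE) auto
  then have "seq_compact S"
    by (simp add: euclidean_product_topology compact_imp_seq_compact)
  moreover have "f k x \<in> {- B x..B x}" for k x using bound[of k x] by (auto simp: abs_le_iff)
  then have "f k \<in> S" for k unfolding S_def by blast
  ultimately obtain l r where "strict_mono r" "(f \<circ> r) \<longlonglongrightarrow> l"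
    unfolding seq_compact_def by metis
  moreover have "(\<lambda>k. f (r k) x) \<longlonglongrightarrow> l x" for x
  proof -
    have "isCont (\<lambda>g. g x) l"
      using continuous_on_product_coordinates[of x]
      by (metis continuous_on_eq_continuous_at open_UNIV UNIV_I)
    from isCont_tendsto_compose[OF this \<open>(f \<circ> r) \<longlonglongrightarrow> l\<close>] show ?thesis by (simp add: o_def)
  qed
  ultimately show ?thesis using that by blast
qed

primrec bound_seq :: "(real \<Rightarrow> real) \<Rightarrow> nat \<Rightarrow> real" where
  "bound_seq R 0 = 1"
| "bound_seq R (Suc n) = max (bound_seq R n) (R (bound_seq R n))"

lemma bound_seq_ge_1: "1 \<le> bound_seq R n"
  by (induction n) auto

lemma bound_seq_mono: "m \<le> n \<Longrightarrow> bound_seq R m \<le> bound_seq R n"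
  by (induction n rule: dec_induct) (simp_all add: le_max_iff_disj)

text \<open>The properties of \<open>\<Gamma>\<close> used to build a complete orbit: \<open>\<phi>\<close> is the coercivity gauge
  of \<open>A\<close>, and every \<open>\<Gamma>\<^sub>i(s)\<close> dominates \<open>\<rho>(s\<^sub>j)\<close> for some \<open>j\<close>
  (for the gain operator, \<open>\<rho> = \<xi> \<circ> \<eta>\<close> and \<open>j\<close> is an in-neighbour of \<open>i\<close>).\<close>

locale decay_system =
  fixes T :: "('i::countable \<Rightarrow> real) \<Rightarrow> ('i \<Rightarrow> real)"
    and A :: "('i \<Rightarrow> real) set"
    and \<phi> \<rho> :: "real \<Rightarrow> real"
  assumes A_linf_plus: "A \<subseteq> linf_plus"
    and A_invariant: "s \<in> A \<Longrightarrow> T s \<in> A"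
    and A_decreasing: "s \<in> A \<Longrightarrow> T s i \<le> s i"
    and A_cofinal: "cofinal A"
    and A_coercive: "Kinf \<phi>" "s \<in> A \<Longrightarrow> \<phi> (supnorm s) \<le> s i"
    and T_lower: "Kinf \<rho>" "(\<And>j. 0 \<le> s j) \<Longrightarrow> \<exists>j. \<rho> (s j) \<le> T s i"
    and T_GATT: "GATT T"
    and T_pointwise_continuous:
      "(\<And>k j. 0 \<le> x k j) \<Longrightarrow> (\<And>j. (\<lambda>k. x k j) \<longlonglongrightarrow> y j) \<Longrightarrow> (\<lambda>k. T (x k) i) \<longlonglongrightarrow> T y i"
begin

lemma A_nonneg: "s \<in> A \<Longrightarrow> 0 \<le> s i"
  using A_linf_plus by (auto intro: linf_plus_nonneg)

lemma A_lower: "s \<in> A \<Longrightarrow> \<rho> (\<phi> (supnorm s)) \<le> T s i"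
proof -
  assume s: "s \<in> A"
  obtain j where j: "\<rho> (s j) \<le> T s i" using T_lower(2)[of s i] A_nonneg[OF s] by blast
  have "0 \<le> \<phi> (supnorm s)"
    using A_linf_plus s by (auto intro: Kinf_nonneg[OF A_coercive(1)] supnorm_nonneg)
  then have "\<rho> (\<phi> (supnorm s)) \<le> \<rho> (s j)" by (rule Kinf_mono[OF T_lower(1) _ A_coercive(2)[OF s]])
  then show ?thesis using j by linarith
qed

lemma backward_norm_bound:
  obtains R where "\<And>s c. s \<in> A \<Longrightarrow> supnorm (T s) \<le> c \<Longrightarrow> supnorm s \<le> R c"
proof -
  obtain R where R: "\<And>c r. 0 \<le> r \<Longrightarrow> \<rho> (\<phi> r) \<le> c \<Longrightarrow> r \<le> R c"
    using Kinf_sublevel_bounded[OF Kinf_comp[OF T_lower(1) A_coercive(1)]] by (auto simp: o_def)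
  have "supnorm s \<le> R c" if s: "s \<in> A" and c: "supnorm (T s) \<le> c" for s c
  proof (rule R)
    show "0 \<le> supnorm s" using A_linf_plus s by (auto intro: supnorm_nonneg)
    have "T s undefined \<le> supnorm (T s)"
      using A_linf_plus A_invariant[OF s] by (auto intro: linf_plus_le_supnorm)
    then show "\<rho> (\<phi> (supnorm s)) \<le> c" using A_lower[OF s, of undefined] c by linarith
  qed
  then show ?thesis using that by blast
qed

lemma iterate_in_A: "s \<in> A \<Longrightarrow> (T ^^ m) s \<in> A"
  by (induction m) (auto simp: A_invariant)

lemma iterate_decreasing:
  assumes "s \<in> A" "m \<le> m'"
  shows "(T ^^ m') s i \<le> (T ^^ m) s i"
  using \<open>m \<le> m'\<close>
proof (induction m' rule: dec_induct)
  case (step n)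
  have "(T ^^ Suc n) s i \<le> (T ^^ n) s i" using A_decreasing[OF iterate_in_A[OF assms(1)]] by simp
  then show ?case using step.IH by linarith
qed simp

lemma first_entry_unit_ball:
  assumes "s \<in> A"
  obtains m where "supnorm ((T ^^ m) s) \<le> 1" "\<And>m'. m' < m \<Longrightarrow> 1 < supnorm ((T ^^ m') s)"
proof -
  have "(\<lambda>m. supnorm ((T ^^ m) s)) \<longlonglongrightarrow> 0"
    using T_GATT assms A_linf_plus unfolding GATT_def by auto
  from order_tendstoD(2)[OF this zero_less_one]
  obtain N where "\<forall>m\<ge>N. supnorm ((T ^^ m) s) < 1" unfolding eventually_sequentially by blast
  then have "\<exists>m. supnorm ((T ^^ m) s) \<le> 1" by (meson le_refl less_imp_le)
  from exists_least_iff[THEN iffD1, OF this] show ?thesis using that by (auto simp: not_le)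
qed

context
  fixes R :: "real \<Rightarrow> real"
  assumes R: "\<And>s c. s \<in> A \<Longrightarrow> supnorm (T s) \<le> c \<Longrightarrow> supnorm s \<le> R c"
begin

lemma orbit_backward_bound:
  assumes s: "s \<in> A" and entry: "supnorm ((T ^^ m) s) \<le> 1" and "n \<le> m"
  shows "supnorm ((T ^^ (m - n)) s) \<le> bound_seq R n"
  using \<open>n \<le> m\<close>
proof (induction n)
  case (Suc n)
  have "m - n = Suc (m - Suc n)" using Suc.prems by simp
  then have "(T ^^ (m - n)) s = T ((T ^^ (m - Suc n)) s)" by simp
  then have "supnorm ((T ^^ (m - Suc n)) s) \<le> R (bound_seq R n)"
    using R[OF iterate_in_A[OF s]] Suc by simp
  then show ?case by simp
qed (use entry in simp)

lemma entry_time_large: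
  assumes a: "a \<in> A" "\<And>i. bound_seq R k < a i" and entry: "supnorm ((T ^^ m) a) \<le> 1"
  shows "k < m"
proof (rule ccontr)
  assume "\<not> k < m"
  have "supnorm a \<le> bound_seq R m" using orbit_backward_bound[OF a(1) entry, of m] by simp
  also have "\<dots> \<le> bound_seq R k" using \<open>\<not> k < m\<close> by (intro bound_seq_mono) simp
  moreover have "a undefined \<le> supnorm a"
    using A_linf_plus a(1) by (auto intro: linf_plus_le_supnorm)
  ultimately show False using a(2)[of undefined] by linarith
qed

lemma shifted_orbit_bound:
  assumes a: "a \<in> A" and entry: "supnorm ((T ^^ m) a) \<le> 1" and n: "- int m \<le> n"
  shows "(T ^^ nat (int m + n)) a i \<le> bound_seq R (nat (- n))"
proof (cases "0 \<le> n")
  case True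
  have "(T ^^ nat (int m + n)) a i \<le> (T ^^ m) a i"
    by (rule iterate_decreasing[OF a]) (use True in simp)
  also have "\<dots> \<le> 1"
    using entry A_linf_plus iterate_in_A[OF a, of m] linf_plus_le_supnorm[of "(T ^^ m) a" i] by auto
  finally show ?thesis using True by simp
next
  case False
  then have "nat (int m + n) = m - nat (- n)" using n by simp
  then have "supnorm ((T ^^ nat (int m + n)) a) \<le> bound_seq R (nat (- n))"
    using orbit_backward_bound[OF a entry, of "nat (- n)"] n by simp
  moreover have "(T ^^ nat (int m + n)) a i \<le> supnorm ((T ^^ nat (int m + n)) a)"
    using A_linf_plus iterate_in_A[OF a] by (auto intro: linf_plus_le_supnorm)
  ultimately show ?thesis by linarith
qed

text \<open>Time is shifted so that the orbit of a large starting point first enters the unit ball at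
  time \<open>0\<close>.\<close>

lemma orbit_segment:
  "\<exists>x m. k < m \<and> (\<forall>n. - int m \<le> n \<longrightarrow> x n \<in> A \<and> x (n + 1) = T (x n))
     \<and> (\<forall>n i. 0 \<le> x n i \<and> x n i \<le> bound_seq R (nat (- n))) \<and> (\<forall>i. \<rho> (\<phi> 1) \<le> x 0 i)"
proof -
  have "(\<lambda>_. bound_seq R k + 1) \<in> linf_plus"
    using bound_seq_ge_1[of R k] by (intro linf_plusI[of _ "bound_seq R k + 1"]) simp_all
  then obtain a where a_A: "a \<in> A" and a_ge: "\<And>i. bound_seq R k + 1 \<le> a i"
    using bspec[OF A_cofinal[unfolded cofinal_def]] by auto
  have a: "a \<in> A" "bound_seq R k < a i" for i using a_A a_ge[of i] by simp_all
  obtain m where entry: "supnorm ((T ^^ m) a) \<le> 1"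
    and before: "\<And>m'. m' < m \<Longrightarrow> 1 < supnorm ((T ^^ m') a)"
    using first_entry_unit_ball[OF a(1)] by blast
  have "k < m" by (rule entry_time_large[OF a entry])
  define x where "x n = (if - int m \<le> n then (T ^^ nat (int m + n)) a else (\<lambda>_. 0))" for n
  have x_in: "x n = (T ^^ nat (int m + n)) a" if "- int m \<le> n" for n
    using that by (simp add: x_def)
  have x_A: "x n \<in> A" if "- int m \<le> n" for n
    unfolding x_in[OF that] by (rule iterate_in_A[OF a(1)])
  have x_step: "x (n + 1) = T (x n)" if "- int m \<le> n" for n
  proof -
    have "nat (int m + (n + 1)) = Suc (nat (int m + n))" using that by simp
    then show ?thesis using x_in[OF that] x_in[of "n + 1"] that by simp
  qed
  have x_nonneg: "0 \<le> x n i" for n i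
    using x_A A_nonneg by (cases "- int m \<le> n") (auto simp: x_def)
  have x_bound: "x n i \<le> bound_seq R (nat (- n))" for n i
    using shifted_orbit_bound[OF a(1) entry] bound_seq_ge_1[of R "nat (- n)"] by (simp add: x_def)
  have x_0: "\<rho> (\<phi> 1) \<le> x 0 i" for i
  proof -
    have "x 0 = (T ^^ Suc (m - 1)) a" using x_in[of 0] \<open>k < m\<close> by simp
    then have x0: "x 0 = T ((T ^^ (m - 1)) a)" by simp
    have "1 < supnorm ((T ^^ (m - 1)) a)" by (rule before) (use \<open>k < m\<close> in simp)
    then have "\<rho> (\<phi> 1) \<le> \<rho> (\<phi> (supnorm ((T ^^ (m - 1)) a)))"
      using Kinf_mono[OF Kinf_comp[OF T_lower(1) A_coercive(1)], of 1] by (simp add: o_def)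
    also have "\<dots> \<le> x 0 i" unfolding x0 by (rule A_lower[OF iterate_in_A[OF a(1)]])
    finally show ?thesis .
  qed
  show ?thesis
    by (intro exI[of _ x] exI[of _ m] conjI allI impI)
       (simp_all add: \<open>k < m\<close> x_A x_step x_nonneg x_bound x_0)
qed

end

lemma convergent_orbit_segments:
  obtains x :: "nat \<Rightarrow> int \<Rightarrow> 'i \<Rightarrow> real" and s :: "int \<Rightarrow> 'i \<Rightarrow> real" and B :: "int \<Rightarrow> real"
  where
    "\<And>n. eventually (\<lambda>k. x k n \<in> A \<and> x k (n + 1) = T (x k n)) sequentially"
    "\<And>n i. (\<lambda>k. x k n i) \<longlonglongrightarrow> s n i"
    "\<And>k n i. 0 \<le> x k n i" "\<And>k n i. x k n i \<le> B n"
    "\<And>k i. \<rho> (\<phi> 1) \<le> x k 0 i"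
proof -
  obtain R where R: "\<And>s c. s \<in> A \<Longrightarrow> supnorm (T s) \<le> c \<Longrightarrow> supnorm s \<le> R c"
    using backward_norm_bound by blast
  obtain x m where seg_k: "\<And>k. k < m k \<and> (\<forall>n. - int (m k) \<le> n \<longrightarrow> x k n \<in> A \<and> x k (n + 1) = T (x k n))
      \<and> (\<forall>n i. 0 \<le> x k n i \<and> x k n i \<le> bound_seq R (nat (- n))) \<and> (\<forall>i. \<rho> (\<phi> 1) \<le> x k 0 i)"
    using orbit_segment[where R=R, OF R] by metis
  have k_less: "k < m k" for k using seg_k[of k] by blast
  have seg: "x k n \<in> A \<and> x k (n + 1) = T (x k n)" if "- int (m k) \<le> n" for k n
    using seg_k[of k] that by blast
  have nonneg: "0 \<le> x k n i" and bound: "x k n i \<le> bound_seq R (nat (- n))" for k n i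
    using seg_k[of k] by blast+
  have start: "\<rho> (\<phi> 1) \<le> x k 0 i" for k i using seg_k[of k] by blast
  have bounded: "\<bar>(\<lambda>(n, i). x k n i) q\<bar> \<le> (\<lambda>(n, i). bound_seq R (nat (- n))) q" for k q
    using nonneg bound by (cases q) simp
  obtain r l where r: "strict_mono r"
    and lim: "\<And>q. (\<lambda>k. (\<lambda>(n, i). x (r k) n i) q) \<longlonglongrightarrow> l q"
    using bounded_seq_pointwise_convergent_subseq[of "\<lambda>k (n, i). x k n i", OF bounded] by blast
  have "eventually (\<lambda>k. - int (m (r k)) \<le> n) sequentially" for n
  proof (rule eventually_sequentiallyI[of "nat (- n)"])
    fix k assume "nat (- n) \<le> k"
    then show "- int (m (r k)) \<le> n" using seq_suble[OF r, of k] k_less[of "r k"] by linarith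
  qed
  then have "eventually (\<lambda>k. x (r k) n \<in> A \<and> x (r k) (n + 1) = T (x (r k) n)) sequentially" for n
    by (rule eventually_mono) (rule seg)
  moreover have "(\<lambda>k. x (r k) n i) \<longlonglongrightarrow> l (n, i)" for n i using lim[of "(n, i)"] by simp
  ultimately show ?thesis
    by (rule that[of "\<lambda>k. x (r k)" "\<lambda>n i. l (n, i)" "\<lambda>n. bound_seq R (nat (- n))"])
       (use nonneg bound start in simp_all)
qed

lemma A_coercive_coord: "s \<in> A \<Longrightarrow> \<phi> (s j) \<le> s i"
proof -
  assume s: "s \<in> A"
  then have "s j \<le> supnorm s" using A_linf_plus by (auto intro: linf_plus_le_supnorm)
  then have "\<phi> (s j) \<le> \<phi> (supnorm s)" by (rule Kinf_mono[OF A_coercive(1) A_nonneg[OF s]])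
  also have "\<dots> \<le> s i" by (rule A_coercive(2)[OF s])
  finally show ?thesis .
qed

lemma coercive_pointwise_limit:
  assumes ev: "eventually (\<lambda>k. x k \<in> A) sequentially" and lim: "\<And>j. (\<lambda>k. x k j) \<longlonglongrightarrow> y j"
    and y: "y \<in> linf_plus"
  shows "\<phi> (supnorm y) \<le> y i"
proof (rule Kinf_supnorm_le[OF A_coercive(1) y])
  fix j
  show "\<phi> (y j) \<le> y i"
  proof (rule tendsto_le[OF trivial_limit_sequentially lim])
    show "(\<lambda>k. \<phi> (x k j)) \<longlonglongrightarrow> \<phi> (y j)"
      using ev linf_plus_nonneg[OF y, of j]
      by (intro continuous_on_tendsto_compose[OF Kinf_continuous_on[OF A_coercive(1)] lim])
         (auto elim: eventually_mono intro: A_nonneg)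
    show "eventually (\<lambda>k. \<phi> (x k j) \<le> x k i) sequentially"
      using ev by (rule eventually_mono) (rule A_coercive_coord)
  qed
qed

lemma complete_orbit_limit:
  obtains s :: "int \<Rightarrow> 'i \<Rightarrow> real" where "\<And>n. s n \<in> linf_plus" "\<And>n. s (n + 1) = T (s n)"
    "\<And>n i. s (n + 1) i \<le> s n i" "\<And>i. \<rho> (\<phi> 1) \<le> s 0 i" "\<And>n i. \<phi> (supnorm (s n)) \<le> s n i"
proof -
  obtain x s and B :: "int \<Rightarrow> real" where ev: "\<And>n. eventually (\<lambda>k. x k n \<in> A \<and> x k (n + 1) = T (x k n)) sequentially"
    and conv: "\<And>n i. (\<lambda>k. x k n i) \<longlonglongrightarrow> s n i"
    and nonneg: "\<And>k n i. 0 \<le> x k n i" and bound: "\<And>k n i. x k n i \<le> B n"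
    and start: "\<And>k i. \<rho> (\<phi> 1) \<le> x k 0 i"
    by (fact convergent_orbit_segments)
  have s_nonneg: "0 \<le> s n i" for n i by (rule LIMSEQ_le_const[OF conv]) (use nonneg in simp)
  have s_lp: "s n \<in> linf_plus" for n
  proof (rule linf_plusI[OF s_nonneg])
    show "s n i \<le> B n" for i by (rule LIMSEQ_le_const2[OF conv]) (use bound in simp)
  qed
  have s_step: "s (n + 1) = T (s n)" for n
  proof
    fix i
    have "(\<lambda>k. T (x k n) i) \<longlonglongrightarrow> T (s n) i" by (rule T_pointwise_continuous[OF nonneg conv])
    moreover have "eventually (\<lambda>k. T (x k n) i = x k (n + 1) i) sequentially"
      using ev[of n] by (rule eventually_mono) simp
    ultimately have "(\<lambda>k. x k (n + 1) i) \<longlonglongrightarrow> T (s n) i" by (rule Lim_transform_eventually)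
    then show "s (n + 1) i = T (s n) i" by (rule LIMSEQ_unique[OF conv])
  qed
  have s_decr: "s (n + 1) i \<le> s n i" for n i
  proof (rule tendsto_le[OF trivial_limit_sequentially conv conv])
    show "eventually (\<lambda>k. x k (n + 1) i \<le> x k n i) sequentially"
      using ev[of n] by (rule eventually_mono) (auto intro: A_decreasing)
  qed
  have s_start: "\<rho> (\<phi> 1) \<le> s 0 i" for i by (rule LIMSEQ_le_const[OF conv]) (use start in simp)
  have "\<phi> (supnorm (s n)) \<le> s n i" for n i
    using ev[of n] by (intro coercive_pointwise_limit[OF _ conv s_lp]) (auto elim: eventually_mono)
  with s_lp s_step s_decr s_start show ?thesis using that by blast
qed

context
  fixes s :: "int \<Rightarrow> 'i \<Rightarrow> real"
  assumes orbit_linf_plus: "\<And>n. s n \<in> linf_plus"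
    and orbit_step: "\<And>n. s (n + 1) = T (s n)"
    and orbit_decreasing: "\<And>n i. s (n + 1) i \<le> s n i"
begin

lemma orbit_nonneg: "0 \<le> s n i"
  by (rule linf_plus_nonneg[OF orbit_linf_plus])

lemma orbit_iterate: "s (int m) = (T ^^ m) (s 0)"
proof (induction m)
  case (Suc m)
  have "s (int (Suc m)) = T (s (int m))" using orbit_step[of "int m"] by (simp add: add.commute)
  then show ?case using Suc.IH by simp
qed simp

lemma orbit_supnorm_small:
  assumes "0 < e"
  shows "\<exists>n. supnorm (s n) < e"
proof -
  have "(\<lambda>m. supnorm ((T ^^ m) (s 0))) \<longlonglongrightarrow> 0"
    using T_GATT orbit_linf_plus unfolding GATT_def by blast
  from order_tendstoD(2)[OF this assms]
  obtain N where "\<forall>m\<ge>N. supnorm ((T ^^ m) (s 0)) < e" unfolding eventually_sequentially by blast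
  then have "supnorm (s (int N)) < e" unfolding orbit_iterate by blast
  then show ?thesis by blast
qed

lemma orbit_INF_pos:
  assumes c: "0 < c" "\<And>i. c \<le> s 0 i"
  shows "0 < (INF i. s n i)"
proof -
  have INF_le: "(INF i. s n i) \<le> s n j" for n j
    by (rule INF_le_linf_plus[OF orbit_linf_plus])
  have "0 < (INF i. s (int m) i)" for m
  proof (induction m)
    case 0
    have "c \<le> (INF i. s 0 i)" by (rule cINF_greatest) (use c in auto)
    then show ?case using c by simp
  next
    case (Suc m)
    have "\<rho> (INF i. s (int m) i) \<le> s (int (Suc m)) i" for i
    proof -
      obtain j where "\<rho> (s (int m) j) \<le> T (s (int m)) i" using T_lower(2) orbit_nonneg by blast
      moreover have "\<rho> (INF i. s (int m) i) \<le> \<rho> (s (int m) j)"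
        using Suc.IH INF_le by (intro Kinf_mono[OF T_lower(1)]) simp_all
      ultimately show ?thesis using orbit_step[of "int m"] by (simp add: add.commute)
    qed
    then have "\<rho> (INF i. s (int m) i) \<le> (INF i. s (int (Suc m)) i)" by (intro cINF_greatest) auto
    moreover have "0 < \<rho> (INF i. s (int m) i)" by (rule Kinf_pos[OF T_lower(1) Suc.IH])
    ultimately show ?case by linarith
  qed
  moreover have "c \<le> (INF i. s n i)" if "n \<le> 0"
  proof (rule cINF_greatest)
    show "c \<le> s n i" for i using c(2)[of i] antimono_int_step[where a="\<lambda>n. s n i", OF orbit_decreasing that]
      by linarith
  qed simp
  ultimately show ?thesis
  proof (cases "n \<le> 0")
    case False
    then have "n = int (nat n)" by simp
    then show ?thesis using \<open>\<And>m. 0 < (INF i. s (int m) i)\<close> by metis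
  qed (use c(1) in fastforce)
qed

text \<open>If the orbit stayed bounded in backward time, its increasing limit as \<open>n \<rightarrow> -\<infinity>\<close>
  would be a nonzero fixed point of \<open>T\<close>, contradicting global attractivity.\<close>

lemma orbit_supnorm_unbounded:
  assumes pos: "0 < s 0 i"
  shows "\<exists>n. M < supnorm (s n)"
proof (rule ccontr)
  assume "\<not> (\<exists>n. M < supnorm (s n))"
  then have sup_le: "supnorm (s n) \<le> M" for n by (simp add: not_less)
  have bounded: "s n j \<le> M" for n j
    using sup_le[of n] linf_plus_le_supnorm[OF orbit_linf_plus, of n j] by linarith
  define X where "X j k = s (- int k) j" for j k
  have X_inc: "incseq (X j)" for j
  proof (rule incseq_SucI)
    fix k
    have "s (- int (Suc k) + 1) j \<le> s (- int (Suc k)) j" by (rule orbit_decreasing)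
    then show "X j k \<le> X j (Suc k)" by (simp add: X_def)
  qed
  define f where "f j = (SUP k. X j k)" for j
  have X_lim: "X j \<longlonglongrightarrow> f j" for j
    unfolding f_def by (rule LIMSEQ_incseq_SUP[OF _ X_inc]) (use bounded in \<open>auto intro!: bdd_aboveI simp: X_def\<close>)
  have f_lp: "f \<in> linf_plus"
  proof (rule linf_plusI)
    show "0 \<le> f j" for j by (rule LIMSEQ_le_const[OF X_lim]) (simp add: X_def orbit_nonneg)
    show "f j \<le> M" for j by (rule LIMSEQ_le_const2[OF X_lim]) (simp add: X_def bounded)
  qed
  have fixed: "T f = f"
  proof
    fix j
    have "(\<lambda>k. T (\<lambda>j. X j (Suc k)) j) \<longlonglongrightarrow> T f j"
      using T_pointwise_continuous[where x="\<lambda>k j. X j (Suc k)" and y=f] LIMSEQ_Suc[OF X_lim]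
      by (simp add: X_def orbit_nonneg)
    moreover have "T (\<lambda>j. X j (Suc k)) = (\<lambda>j. X j k)" for k
      using orbit_step[of "- int (Suc k)"] by (simp add: X_def)
    ultimately show "T f j = f j" using LIMSEQ_unique[OF _ X_lim] by simp
  qed
  have "(T ^^ m) f = f" for m by (induction m) (simp_all add: fixed)
  moreover have "(\<lambda>m. supnorm ((T ^^ m) f)) \<longlonglongrightarrow> 0"
    using T_GATT f_lp unfolding GATT_def by blast
  ultimately have "supnorm f = 0" by (simp add: LIMSEQ_const_iff)
  moreover have "s 0 i \<le> f i" using incseq_le[OF X_inc X_lim, of i 0] by (simp add: X_def)
  ultimately show False using pos linf_plus_le_supnorm[OF f_lp, of i] by linarith
qed

end

lemma complete_orbit:
  obtains s :: "int \<Rightarrow> 'i \<Rightarrow> real" where "\<And>n. s n \<in> linf_plus" "\<And>n. s (n + 1) = T (s n)"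
    "\<And>n i. s (n + 1) i \<le> s n i" "\<And>n. 0 < (INF i. s n i)" "\<And>M. \<exists>n. M < (INF i. s n i)"
    "\<And>e. 0 < e \<Longrightarrow> \<exists>n. supnorm (s n) < e"
proof -
  obtain s :: "int \<Rightarrow> 'i \<Rightarrow> real" where lp: "\<And>n. s n \<in> linf_plus"
    and step: "\<And>n. s (n + 1) = T (s n)" and decr: "\<And>n i. s (n + 1) i \<le> s n i"
    and start: "\<And>i. \<rho> (\<phi> 1) \<le> s 0 i" and coercive: "\<And>n i. \<phi> (supnorm (s n)) \<le> s n i"
    by (fact complete_orbit_limit)
  note orbit = lp step decr
  have start_pos: "0 < \<rho> (\<phi> 1)"
    by (intro Kinf_pos[OF T_lower(1)] Kinf_pos[OF A_coercive(1)]) simp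
  have pos: "0 < (INF i. s n i)" for n
    by (rule orbit_INF_pos[where s=s, OF orbit start_pos start])
  have big: "\<exists>n. M < (INF i. s n i)" for M
  proof -
    obtain r where r: "0 \<le> r" "M < \<phi> r" using Kinf_unbounded[OF A_coercive(1)] by blast
    have "0 < s 0 undefined" using start_pos start[of undefined] by linarith
    then obtain n where "r < supnorm (s n)"
      using orbit_supnorm_unbounded[where s=s, OF orbit] by blast
    then have "\<phi> r \<le> \<phi> (supnorm (s n))" by (intro Kinf_mono[OF A_coercive(1) r(1)]) simp
    also have "\<dots> \<le> (INF i. s n i)" by (rule cINF_greatest) (simp_all add: coercive)
    finally show ?thesis using r(2) by (intro exI[of _ n]) linarith
  qed
  show ?thesis by (rule that[OF orbit pos big orbit_supnorm_small[where s=s, OF orbit]])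
qed

end

lemma decay_system_Gam:
  fixes Iset :: "'i::countable \<Rightarrow> 'i set"
  assumes gain: "gain_operator Iset gam mu"
    and A_sub: "A \<subseteq> Psi (Gam Iset gam mu)" and A_inv: "\<forall>s\<in>A. Gam Iset gam mu s \<in> A"
    and A_cofinal: "cofinal A" and A_coercive: "coercive A"
    and gatt: "GATT (Gam Iset gam mu)" and asmA: "assumption_A Iset gam"
  obtains \<phi> \<rho> where "decay_system (Gam Iset gam mu) A \<phi> \<rho>"
proof -
  obtain \<xi> where \<xi>: "Kinf \<xi>" "\<And>i s. s \<in> linf_plus \<Longrightarrow> ennreal (\<xi> (supnorm s)) \<le> mu i s"
    using gain_lower[OF gain] by blast
  obtain \<eta> where \<eta>: "Kinf \<eta>" "\<And>i j r. j \<in> Iset i \<Longrightarrow> 0 \<le> r \<Longrightarrow> \<eta> r \<le> gam i j r"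
    and nonempty: "\<And>i. Iset i \<noteq> {}"
    using asmA unfolding assumption_A_def by blast
  obtain \<phi> where \<phi>: "Kinf \<phi>" "\<And>s i. s \<in> A \<Longrightarrow> \<phi> (supnorm s) \<le> s i"
    using A_coercive unfolding coercive_def by blast
  have lower: "\<exists>j. (\<xi> \<circ> \<eta>) (s j) \<le> Gam Iset gam mu s i" if s: "\<And>j. 0 \<le> s j" for s i
  proof -
    obtain j where j: "j \<in> Iset i" using nonempty[of i] by blast
    have "\<xi> (\<eta> (s j)) \<le> \<xi> (gam i j (s j))"
      by (rule Kinf_mono[OF \<xi>(1) Kinf_nonneg[OF \<eta>(1) s] \<eta>(2)[OF j s]])
    also have "\<dots> \<le> Gam Iset gam mu s i" by (rule Gam_ge_gain[OF gain, where s=s, OF s j \<xi>])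
    finally show ?thesis by (intro exI[of _ j]) (simp add: o_def)
  qed
  have "decay_system (Gam Iset gam mu) A \<phi> (\<xi> \<circ> \<eta>)"
  proof
    show "A \<subseteq> linf_plus" using A_sub by (auto simp: Psi_def)
    show "Gam Iset gam mu s i \<le> s i" if "s \<in> A" for s i using A_sub that by (auto simp: Psi_def)
    show "Kinf (\<xi> \<circ> \<eta>)" by (rule Kinf_comp[OF \<xi>(1) \<eta>(1)])
    show "(\<lambda>k. Gam Iset gam mu (x k) i) \<longlonglongrightarrow> Gam Iset gam mu y i"
      if "\<And>k j. 0 \<le> x k j" "\<And>j. (\<lambda>k. x k j) \<longlonglongrightarrow> y j" for x y i
      by (rule Gam_pointwise_continuous[OF gain that])
    show "Gam Iset gam mu s \<in> A" if "s \<in> A" for s using A_inv that by blast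
  qed (fact A_cofinal \<phi>(1) \<phi>(2) gatt lower)+
  then show ?thesis by (rule that)
qed

theorem theorem3p21:
  fixes Iset :: "'i::countable \<Rightarrow> 'i set"
    and gam :: "'i \<Rightarrow> 'i \<Rightarrow> real \<Rightarrow> real"
    and mu :: "'i \<Rightarrow> ('i \<Rightarrow> real) \<Rightarrow> ennreal"
    and A :: "('i \<Rightarrow> real) set"
  assumes gain: "gain_operator Iset gam mu"
    and A_sub: "A \<subseteq> Psi (Gam Iset gam mu)"
    and A_closed: "weak_star_closed A"
    and A_inv: "\<forall>s\<in>A. Gam Iset gam mu s \<in> A"
    and A_cofinal: "cofinal A"
    and A_coercive: "coercive A"
    and gatt: "GATT (Gam Iset gam mu)"
    and asmA: "assumption_A Iset gam"
    and out_nb: "\<forall>i. \<exists>j. i \<in> Iset j"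
  shows "\<exists>s0 \<in> interior_cone \<inter> Psi (Gam Iset gam mu).
           \<exists>s :: int \<Rightarrow> ('i \<Rightarrow> real). s 0 = s0 \<and>
             (\<forall>n. s (n + 1) = Gam Iset gam mu (s n)) \<and>
             (\<exists>\<sigma>. interpolates s \<sigma> \<and> path_of_decay (Gam Iset gam mu) \<sigma>)"
proof -
  obtain \<phi> \<rho> where "decay_system (Gam Iset gam mu) A \<phi> \<rho>"
    using decay_system_Gam[OF gain A_sub A_inv A_cofinal A_coercive gatt asmA] by blast
  then interpret decay_system "Gam Iset gam mu" A \<phi> \<rho> .
  obtain s :: "int \<Rightarrow> 'i \<Rightarrow> real" where lp: "\<And>n. s n \<in> linf_plus"
    and step: "\<And>n. s (n + 1) = Gam Iset gam mu (s n)" and decr: "\<And>n i. s (n + 1) i \<le> s n i"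
    and pos: "\<And>n. 0 < (INF i. s n i)" and big: "\<And>M. \<exists>n. M < (INF i. s n i)"
    and small: "\<And>e. 0 < e \<Longrightarrow> \<exists>n. supnorm (s n) < e"
    by (fact complete_orbit)
  have "s 0 \<in> interior_cone \<inter> Psi (Gam Iset gam mu)"
    using INF_pos_imp_interior_cone[OF lp pos] lp step[of 0] decr[of 0] by (simp add: Psi_def)
  moreover have "path_of_decay (Gam Iset gam mu) (dyadic_path s)"
    using Gam_mono[OF gain] Gam_zero[OF gain] lp step decr pos big small
    by (rule path_of_decay_dyadic_path)
  ultimately show ?thesis using step interpolates_dyadic_path by blast
qed

end
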